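(* In the bootstrap setting, let $|\alpha|+|\beta|+|\sigma|\le10$ and $i,j\in\{1,2,3\}$. Then for all $T\in[0,T_{\mathrm{boot}})$, $\mathcal A^{\alpha,\beta,\sigma}_5\lesssim\epsilon^2(1+T)^{2|\beta|(1+\delta)}$, where $$\mathcal A^{\alpha,\beta,\sigma}_5:=\big\|(1+t)\langle v\rangle^{2\nu_{\alpha,\beta,\sigma}-1}\langle x-(t+1)v\rangle^{2\omega_{\alpha,\beta,\sigma}-1}\bar a_{ij}(D^{\alpha,\beta,\sigma}g)^2\big\|_{L^1([0,T];L^1_xL^1_v)}.$$
   Context: Notation: $\langle z\rangle=\sqrt{1+|z|^2}$; repeated lower-case indices summed over $\{1,2,3\}$ unless fixed. Multi-indices $\alpha,\beta,\sigma\in(\mathbb N\cup\{0\})^3$ with $|\alpha|=\sum\alpha_l$. $D^{\alpha,\beta,\sigma}=\partial_x^\alpha\partial_v^\beta Y^\sigma$ with $Y^\sigma=\prod_lY_l^{\sigma_l}$, $Y_l=(t+1)\partial_{x_l}+\partial_{v_l}$. $\nu_{\alpha,\beta,\sigma}=20-\frac32(|\alpha|+|\sigma|)-\frac12|\beta|$, $\omega_{\alpha,\beta,\sigma}=20-\frac32|\sigma|-\frac12(|\alpha|+|\beta|)$, $W_{\alpha,\beta,\sigma}=\langle v\rangle^{\nu_{\alpha,\beta,\sigma}}\langle x-(t+1)v\rangle^{\omega_{\alpha,\beta,\sigma}}$. Mixed norms take $v$ first, then $x$, then $t$. Bootstrap setting: fix $\gamma\in[0,1)$, $d_0>0$, $\delta\in(0,\frac18)$;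 $a_{ij}(z)=(\delta_{ij}-z_iz_j/|z|^2)|z|^{\gamma+2}$, $c=\partial^2_{z_iz_j}a_{ij}$, $\bar a_{ij}=\int a_{ij}(v-v_* )f(t,x,v_* )dv_*$, $\bar c=\int c(v-v_* )f(t,x,v_* )dv_*$; Landau equation $\partial_tf+v_i\partial_{x_i}f=\bar a_{ij}\partial^2_{v_iv_j}f-\bar cf$; $d(t)=d_0(1+(1+t)^{-\delta})$. Energy norm for $T>0$: $\|h\|^2_{E_T}=\sum_{|\alpha|+|\beta|+|\sigma|\le10}(1+T)^{-|\beta|(1+\delta)}\big(\|W_{\alpha,\beta,\sigma}D^{\alpha,\beta,\sigma}h\|^2_{L^\infty([0,T);L^2_xL^2_v)}+\|\langle v\rangle^{1/2}W_{\alpha,\beta,\sigma}D^{\alpha,\beta,\sigma}h\|^2_{L^2([0,T);L^2_xL^2_v)}\big)$. $\epsilon_0=\epsilon_0(d_0,\gamma)>0$ is a fixed sufficiently small constant, $\epsilon\in[0,\epsilon_0]$, and $f_{\mathrm{ini}}$ satisfies $\sum_{|\alpha|+|\beta|+|\sigma|\le10}\|\langle v\rangle^{20-\frac32|\alpha|-\frac12|\beta|-\frac32|\sigma|}\langle x-v\rangle^{20-\frac32|\sigma|-\frac12|\beta|-\frac12|\alpha|}\partial_x^\alpha\partial_v^\beta(\partial_x+\partial_v)^\sigma(e^{2d_0\langle v\rangle}f_{\mathrm{ini}})\|^2_{L^2_xL^2_v}<\epsilon$. $T_{\mathrm{boot}}>0$ and $f:[0,T_{\mathrm{boot}})\times\mathbb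 R^3\times\mathbb R^3\to\mathbb R$ is a (sufficiently regular) solution of the Landau equation with $f\ge0$, $f(0)=f_{\mathrm{ini}}$; $g=e^{d(t)\langle v\rangle}f$; and $\|g\|_{E_T}\le\epsilon^{3/4}$ for all $T\in[0,T_{\mathrm{boot}})$. $A\lesssim B$ means $A\le CB$ with $C$ depending only on $d_0,\gamma$. *)

theory Defs
  imports "HOL-Analysis.Analysis"
begin

definition jb :: "real^3 \<Rightarrow> real" where
  "jb z = sqrt (1 + (norm z)\<^sup>2)"

definition mlen :: "(3 \<Rightarrow> nat) \<Rightarrow> nat" where
  "mlen a = (\<Sum>l\<in>UNIV. a l)"

definition pdir :: "('a::real_normed_vector \<Rightarrow> real) \<Rightarrow> 'a \<Rightarrow> 'a \<Rightarrow> real" where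
  "pdir F u p = deriv (\<lambda>s. F (p + s *\<^sub>R u)) 0"

definition iter_pdir :: "'a::real_normed_vector list \<Rightarrow> ('a \<Rightarrow> real) \<Rightarrow> 'a \<Rightarrow> real" where
  "iter_pdir us F = foldr (\<lambda>u H. pdir H u) us F"

definition smooth_on :: "'a::euclidean_space set \<Rightarrow> ('a \<Rightarrow> real) \<Rightarrow> bool" where
  "smooth_on S F \<longleftrightarrow> (\<forall>us. set us \<subseteq> Basis \<longrightarrow>
      iter_pdir us F differentiable_on S \<and> continuous_on S (iter_pdir us F))"

type_synonym phase_fun = "real \<Rightarrow> real^3 \<Rightarrow> real^3 \<Rightarrow> real"

definition dx :: "3 \<Rightarrow> phase_fun \<Rightarrow> phase_fun" where
  "dx l h = (\<lambda>t x v. deriv (\<lambda>s. h t (x + s *\<^sub>R axis l 1) v) 0)"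

definition dv :: "3 \<Rightarrow> phase_fun \<Rightarrow> phase_fun" where
  "dv l h = (\<lambda>t x v. deriv (\<lambda>s. h t x (v + s *\<^sub>R axis l 1)) 0)"

definition Yop :: "3 \<Rightarrow> phase_fun \<Rightarrow> phase_fun" where
  "Yop l h = (\<lambda>t x v. (t + 1) * dx l h t x v + dv l h t x v)"

text \<open>d_{x_l} + d_{v_l} (the operator Y_l at t = 0, used for the initial data).\<close>
definition Y0op :: "3 \<Rightarrow> phase_fun \<Rightarrow> phase_fun" where
  "Y0op l h = (\<lambda>t x v. dx l h t x v + dv l h t x v)"

definition multi :: "(3 \<Rightarrow> phase_fun \<Rightarrow> phase_fun) \<Rightarrow> (3 \<Rightarrow> nat) \<Rightarrow> phase_fun \<Rightarrow> phase_fun" where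
  "multi P a = (P 1 ^^ a 1) \<circ> (P 2 ^^ a 2) \<circ> (P 3 ^^ a 3)"

definition Dop :: "(3 \<Rightarrow> nat) \<Rightarrow> (3 \<Rightarrow> nat) \<Rightarrow> (3 \<Rightarrow> nat) \<Rightarrow> phase_fun \<Rightarrow> phase_fun" where
  "Dop a b s h = multi dx a (multi dv b (multi Yop s h))"

definition D0op :: "(3 \<Rightarrow> nat) \<Rightarrow> (3 \<Rightarrow> nat) \<Rightarrow> (3 \<Rightarrow> nat) \<Rightarrow> phase_fun \<Rightarrow> phase_fun" where
  "D0op a b s h = multi dx a (multi dv b (multi Y0op s h))"

definition nu :: "(3 \<Rightarrow> nat) \<Rightarrow> (3 \<Rightarrow> nat) \<Rightarrow> (3 \<Rightarrow> nat) \<Rightarrow> real" where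
  "nu a b s = 20 - 3/2 * real (mlen a + mlen s) - 1/2 * real (mlen b)"

definition omega :: "(3 \<Rightarrow> nat) \<Rightarrow> (3 \<Rightarrow> nat) \<Rightarrow> (3 \<Rightarrow> nat) \<Rightarrow> real" where
  "omega a b s = 20 - 3/2 * real (mlen s) - 1/2 * real (mlen a + mlen b)"

definition Wt :: "(3 \<Rightarrow> nat) \<Rightarrow> (3 \<Rightarrow> nat) \<Rightarrow> (3 \<Rightarrow> nat) \<Rightarrow> phase_fun" where
  "Wt a b s t x v = jb v powr nu a b s * jb (x - (t + 1) *\<^sub>R v) powr omega a b s"

definition idx10 :: "((3 \<Rightarrow> nat) \<times> (3 \<Rightarrow> nat) \<times> (3 \<Rightarrow> nat)) set" where
  "idx10 = {(a, b, s). mlen a + mlen b + mlen s \<le> 10}"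

definition L2xv_sq :: "phase_fun \<Rightarrow> real \<Rightarrow> ennreal" where
  "L2xv_sq F t = (\<integral>\<^sup>+ x. (\<integral>\<^sup>+ v. ennreal ((F t x v)\<^sup>2) \<partial>lborel) \<partial>lborel)"

definition energy_sq :: "real \<Rightarrow> real \<Rightarrow> phase_fun \<Rightarrow> ennreal" where
  "energy_sq \<delta> T h = (\<Sum>(a, b, s)\<in>idx10.
      ennreal ((1 + T) powr (- real (mlen b) * (1 + \<delta>))) *
      ((SUP t\<in>{0..<T}. L2xv_sq (\<lambda>t x v. Wt a b s t x v * Dop a b s h t x v) t)
       + (\<integral>\<^sup>+ t\<in>{0..<T}. L2xv_sq
            (\<lambda>t x v. sqrt (jb v) * Wt a b s t x v * Dop a b s h t x v) t \<partial>lborel)))"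

definition acoef :: "real \<Rightarrow> 3 \<Rightarrow> 3 \<Rightarrow> real^3 \<Rightarrow> real" where
  "acoef \<gamma> i j z = ((if i = j then 1 else 0) - z$i * z$j / (norm z)\<^sup>2) * norm z powr (\<gamma> + 2)"

definition ccoef :: "real \<Rightarrow> real^3 \<Rightarrow> real" where
  "ccoef \<gamma> z = (\<Sum>i\<in>UNIV. \<Sum>j\<in>UNIV.
      pdir (pdir (acoef \<gamma> i j) (axis j 1)) (axis i 1) z)"

definition abar :: "real \<Rightarrow> phase_fun \<Rightarrow> 3 \<Rightarrow> 3 \<Rightarrow> phase_fun" where
  "abar \<gamma> f i j t x v = (\<integral>w. acoef \<gamma> i j (v - w) * f t x w \<partial>lborel)"

definition cbar :: "real \<Rightarrow> phase_fun \<Rightarrow> phase_fun" where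
  "cbar \<gamma> f t x v = (\<integral>w. ccoef \<gamma> (v - w) * f t x w \<partial>lborel)"

definition landau_sol :: "real \<Rightarrow> real \<Rightarrow> phase_fun \<Rightarrow> bool" where
  "landau_sol \<gamma> Tb f \<longleftrightarrow> (\<forall>t x v. 0 < t \<and> t < Tb \<longrightarrow>
      deriv (\<lambda>s. f s x v) t + (\<Sum>i\<in>UNIV. v$i * dx i f t x v)
      = (\<Sum>i\<in>UNIV. \<Sum>j\<in>UNIV. abar \<gamma> f i j t x v * dv i (dv j f) t x v)
        - cbar \<gamma> f t x v * f t x v)"

definition dfun :: "real \<Rightarrow> real \<Rightarrow> real \<Rightarrow> real" where
  "dfun d0 \<delta> t = d0 * (1 + (1 + t) powr (- \<delta>))"

definition gfun :: "real \<Rightarrow> real \<Rightarrow> phase_fun \<Rightarrow> phase_fun" where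
  "gfun d0 \<delta> f t x v = exp (dfun d0 \<delta> t * jb v) * f t x v"

definition init_small :: "real \<Rightarrow> real \<Rightarrow> phase_fun \<Rightarrow> bool" where
  "init_small d0 \<epsilon> f \<longleftrightarrow>
     (\<Sum>(a, b, s)\<in>idx10. L2xv_sq (\<lambda>t x v. Wt a b s 0 x v *
         D0op a b s (\<lambda>t x v. exp (2 * d0 * jb v) * f 0 x v) t x v) 0) < ennreal \<epsilon>"

definition A5 :: "real \<Rightarrow> real \<Rightarrow> real \<Rightarrow> phase_fun \<Rightarrow> (3 \<Rightarrow> nat) \<Rightarrow> (3 \<Rightarrow> nat) \<Rightarrow> (3 \<Rightarrow> nat)
                  \<Rightarrow> 3 \<Rightarrow> 3 \<Rightarrow> real \<Rightarrow> ennreal" where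
  "A5 \<gamma> d0 \<delta> f a b s i j T = (\<integral>\<^sup>+ t\<in>{0..T}. (\<integral>\<^sup>+ x. (\<integral>\<^sup>+ v. ennreal \<bar>
      (1 + t) * jb v powr (2 * nu a b s - 1) * jb (x - (t + 1) *\<^sub>R v) powr (2 * omega a b s - 1)
      * abar \<gamma> f i j t x v * (Dop a b s (gfun d0 \<delta> f) t x v)\<^sup>2\<bar> \<partial>lborel) \<partial>lborel) \<partial>lborel)"

end

theory Submission
  imports Defs
begin

(* Since |a_ij(z)| <= 2 |z|^(gamma + 2) and (1 + t) |v - w| is the distance between
   x - (t + 1) v and x - (t + 1) w, the coefficient is controlled by a velocity moment of f:
     (1 + t) |abar_ij(t, x, v)| <= 16 <v>^2 <x - (t + 1) v> S(t, x),
     S(t, x) = int <w>^2 <x - (t + 1) w> f(t, x, w) dw.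
   The moment S is O(eps^(3/4)).  By the fundamental theorem of calculus along the three
   axes, |f(t, x, w)| is bounded by the integral over the unit cube at x of the x-derivatives
   of f of order at most one in each direction; AM-GM at scale lambda = eps^(3/4) then bounds
   S by lambda int <w>^(-6) dw plus 1/lambda times the weighted L^2 norms of the corresponding
   derivatives of g = exp(d(t) <v>) f, which the energy bound makes O(eps^(3/2)).  Inserted
   into A_5, this leaves eps^(3/4) times the time-integrated part of the energy, that is
   O(eps^(3/4) eps^(3/2) (1 + T)^(|beta| (1 + delta))). *)

(* Unlike nn_integral_cmult, no measurability is needed once the constant is finite. *)
lemma nn_integral_cmult_le_finite:
  fixes c :: ennreal
  assumes "c < top"
  shows "(\<integral>\<^sup>+x. c * f x \<partial>M) \<le> c * integral\<^sup>N M f"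
proof (cases "c = 0")
  case False
  have ci: "c * inverse c = 1"
    using False assms divide_ennreal_def ennreal_divide_self by (auto simp: mult.commute)
  show ?thesis
    unfolding nn_integral_def[of M "\<lambda>x. c * f x"]
  proof (rule SUP_least)
    fix g assume g: "g \<in> {g. simple_function M g \<and> g \<le> (\<lambda>x. c * f x)}"
    define h where "h x = g x * inverse c" for x
    have g_eq: "g = (\<lambda>x. c * h x)"
      using ci by (simp add: h_def fun_eq_iff mult.left_commute[of c])
    have "h \<le> f"
    proof (rule le_funI)
      fix x
      have "h x \<le> c * f x * inverse c"
        using g by (auto simp: h_def le_fun_def intro: mult_right_mono)
      also have "\<dots> = f x"
        using ci by (metis mult.assoc mult.commute mult_1)
      finally show "h x \<le> f x" .
    qed
    moreover have "simple_function M h"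
      unfolding h_def using g by auto
    ultimately show "integral\<^sup>S M g \<le> c * integral\<^sup>N M f"
      unfolding g_eq
      by (auto simp: nn_integral_def intro!: mult_left_mono SUP_upper)
  qed
qed simp

lemma nn_integral_cmult_finite:
  fixes c :: ennreal
  assumes "c < top"
  shows "(\<integral>\<^sup>+x. c * f x \<partial>M) = c * integral\<^sup>N M f"
proof (cases "c = 0")
  case False
  have ci: "inverse c * c = 1"
    using False assms divide_ennreal_def ennreal_divide_self by (auto simp: mult.commute)
  have inv_fin: "inverse c < top"
    using False by (metis ennreal_inverse_eq_top_iff top.not_eq_extremum)
  have "c * integral\<^sup>N M f = c * (\<integral>\<^sup>+x. inverse c * (c * f x) \<partial>M)"
    using ci by (simp add: mult.assoc[symmetric])
  also have "\<dots> \<le> c * (inverse c * (\<integral>\<^sup>+x. c * f x \<partial>M))"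
    by (intro mult_left_mono nn_integral_cmult_le_finite inv_fin) simp
  also have "\<dots> = (\<integral>\<^sup>+x. c * f x \<partial>M)"
    using ci by (simp add: mult.assoc[symmetric] mult.commute[of c])
  finally show ?thesis
    using nn_integral_cmult_le_finite[OF assms] by (intro antisym)
qed simp

lemma nn_integral_multc_finite:
  fixes c :: ennreal
  assumes "c < top"
  shows "(\<integral>\<^sup>+x. f x * c \<partial>M) = integral\<^sup>N M f * c"
  using nn_integral_cmult_finite[OF assms] by (simp add: mult.commute)

lemma ennreal_indicator_less_top: "(indicator A x :: ennreal) < top"
  by (simp split: split_indicator)

lemma norm_integral_le_nn_integral_norm:
  fixes f :: "'a \<Rightarrow> 'b::{banach, second_countable_topology}"
  shows "ennreal (norm (integral\<^sup>L M f)) \<le> (\<integral>\<^sup>+x. norm (f x) \<partial>M)"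
  by (cases "integrable M f") (auto simp: integral_norm_bound_ennreal not_integrable_integral_eq)

lemma borel_measurable_lborel_pair_of_continuous:
  fixes h :: "'a::euclidean_space \<Rightarrow> 'b::euclidean_space \<Rightarrow> real"
  assumes cont: "continuous_on UNIV (\<lambda>p. h (fst p) (snd p))"
  shows "(\<lambda>(x, y). ennreal (h x y)) \<in> borel_measurable (lborel \<Otimes>\<^sub>M lborel)"
    and "(\<lambda>(y, x). ennreal (h x y)) \<in> borel_measurable (lborel \<Otimes>\<^sub>M lborel)"
proof -
  have "continuous_on UNIV (\<lambda>p::'b \<times> 'a. (snd p, fst p))"
    by (intro continuous_on_Pair continuous_on_fst continuous_on_snd continuous_on_id)
  then have "continuous_on UNIV (\<lambda>p. h (snd p) (fst p))"
    using continuous_on_compose2[OF cont] by fastforce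
  then have "(\<lambda>p. h (fst p) (snd p)) \<in> borel_measurable borel" "(\<lambda>p. h (snd p) (fst p)) \<in> borel_measurable borel"
    using cont by (auto intro: borel_measurable_continuous_onI)
  then show "(\<lambda>(x, y). ennreal (h x y)) \<in> borel_measurable (lborel \<Otimes>\<^sub>M lborel)"
    and "(\<lambda>(y, x). ennreal (h x y)) \<in> borel_measurable (lborel \<Otimes>\<^sub>M lborel)"
    by (simp_all add: lborel_prod split_beta' measurable_compose[OF _ measurable_ennreal])
qed

lemma prod_Basis_vec: "(\<Prod>b\<in>Basis. F ((x::real^'n) \<bullet> b)) = (\<Prod>i\<in>UNIV. F (x $ i))"
proof -
  have Basis: "(Basis :: (real^'n) set) = (\<lambda>i. axis i 1) ` UNIV"
    by (auto simp: Basis_vec_def)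
  have "inj (\<lambda>i::'n. axis i (1::real))"
    by (rule injI) (simp add: axis_eq_axis)
  then show ?thesis
    unfolding Basis by (simp add: prod.reindex inner_axis)
qed

lemma lborel_vec3_eq_distr_pair:
  "lborel = distr (lborel \<Otimes>\<^sub>M (lborel \<Otimes>\<^sub>M lborel)) borel
     (\<lambda>(c, b, a). c *\<^sub>R axis 3 1 + b *\<^sub>R axis 2 1 + a *\<^sub>R axis 1 1 :: real^3)"
  (is "_ = distr ?P borel ?T")
proof (rule lborel_eqI)
  fix l u :: "real^3"
  assume "\<And>b. b \<in> Basis \<Longrightarrow> l \<bullet> b \<le> u \<bullet> b"
  then have lu: "l $ i \<le> u $ i" for i
    by (simp add: cart_eq_inner_axis axis_in_Basis_iff)
  have T_meas: "?T \<in> ?P \<rightarrow>\<^sub>M borel"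
    by measurable
  have "?T -` box l u \<inter> space ?P = {l$3<..<u$3} \<times> {l$2<..<u$2} \<times> {l$1<..<u$1}"
    by (auto simp: mem_box_cart forall_3 axis_def space_pair_measure)
  moreover have "emeasure ?P (A \<times> B \<times> C) = emeasure lborel A * (emeasure lborel B * emeasure lborel C)"
    if "A \<in> sets borel" "B \<in> sets borel" "C \<in> sets borel" for A B C :: "real set"
  proof -
    have sf: "sigma_finite_measure (lborel \<Otimes>\<^sub>M (lborel :: real measure))"
      by (simp add: lborel_prod sigma_finite_lborel)
    have "emeasure ?P (A \<times> B \<times> C) = emeasure lborel A * emeasure (lborel \<Otimes>\<^sub>M lborel) (B \<times> C)"
      using that by (intro sigma_finite_measure.emeasure_pair_measure_Times[OF sf]) (auto intro!: pair_measureI)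
    also have "emeasure (lborel \<Otimes>\<^sub>M lborel) (B \<times> C) = emeasure lborel B * emeasure lborel C"
      using that by (intro lborel.emeasure_pair_measure_Times) auto
    finally show ?thesis .
  qed
  ultimately have "emeasure (distr ?P borel ?T) (box l u)
      = emeasure lborel {l$3<..<u$3} * (emeasure lborel {l$2<..<u$2} * emeasure lborel {l$1<..<u$1})"
    by (simp add: emeasure_distr[OF T_meas])
  also have "\<dots> = ennreal (u$3 - l$3) * (ennreal (u$2 - l$2) * ennreal (u$1 - l$1))"
    using lu by simp
  also have "\<dots> = (\<Prod>b\<in>Basis. (u - l) \<bullet> b)"
  proof -
    have "(\<Prod>b\<in>Basis. (u - l) \<bullet> b) = (u - l)$1 * (u - l)$2 * (u - l)$3"
      unfolding prod_Basis_vec[where F = "\<lambda>r. r"] UNIV_3 by (simp add: ac_simps)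
    then show ?thesis
      using lu by (simp add: ennreal_mult' mult_ac)
  qed
  finally show "emeasure (distr ?P borel ?T) (box l u) = (\<Prod>b\<in>Basis. (u - l) \<bullet> b)" .
qed simp

lemma nn_integral_lborel_vec3:
  fixes \<Phi> :: "real^3 \<Rightarrow> ennreal"
  assumes [measurable]: "\<Phi> \<in> borel_measurable borel"
  shows "(\<integral>\<^sup>+y. \<Phi> y \<partial>lborel)
    = (\<integral>\<^sup>+c. \<integral>\<^sup>+b. \<integral>\<^sup>+a. \<Phi> (c *\<^sub>R axis 3 1 + b *\<^sub>R axis 2 1 + a *\<^sub>R axis 1 1) \<partial>lborel \<partial>lborel \<partial>lborel)"
proof -
  have "(\<integral>\<^sup>+y. \<Phi> y \<partial>lborel)
      = (\<integral>\<^sup>+(c, b, a). \<Phi> (c *\<^sub>R axis 3 1 + b *\<^sub>R axis 2 1 + a *\<^sub>R axis 1 1) \<partial>(lborel \<Otimes>\<^sub>M (lborel \<Otimes>\<^sub>M lborel)))"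
    by (subst lborel_vec3_eq_distr_pair) (simp add: nn_integral_distr split_beta')
  also have "\<dots> = (\<integral>\<^sup>+c. \<integral>\<^sup>+(b, a). \<Phi> (c *\<^sub>R axis 3 1 + b *\<^sub>R axis 2 1 + a *\<^sub>R axis 1 1) \<partial>(lborel \<Otimes>\<^sub>M lborel) \<partial>lborel)"
    by (subst lborel_pair.nn_integral_fst[symmetric]) (auto simp: split_beta')
  also have "\<dots> = (\<integral>\<^sup>+c. \<integral>\<^sup>+b. \<integral>\<^sup>+a. \<Phi> (c *\<^sub>R axis 3 1 + b *\<^sub>R axis 2 1 + a *\<^sub>R axis 1 1) \<partial>lborel \<partial>lborel \<partial>lborel)"
  proof (rule nn_integral_cong)
    fix c :: real
    have "(\<lambda>(b, a). \<Phi> (c *\<^sub>R axis 3 1 + b *\<^sub>R axis 2 1 + a *\<^sub>R axis 1 1)) \<in> borel_measurable (lborel \<Otimes>\<^sub>M lborel)"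
      by measurable
    from lborel.nn_integral_fst[OF this]
    show "(\<integral>\<^sup>+(b, a). \<Phi> (c *\<^sub>R axis 3 1 + b *\<^sub>R axis 2 1 + a *\<^sub>R axis 1 1) \<partial>(lborel \<Otimes>\<^sub>M lborel))
        = (\<integral>\<^sup>+b. \<integral>\<^sup>+a. \<Phi> (c *\<^sub>R axis 3 1 + b *\<^sub>R axis 2 1 + a *\<^sub>R axis 1 1) \<partial>lborel \<partial>lborel)"
      by simp
  qed
  finally show ?thesis .
qed

(* 1 :: real^3 is the all-ones vector, so cbox x (x + 1) is the unit cube with corner x. *)
lemma nn_integral_unit_cube_iterated:
  fixes \<Phi> :: "real^3 \<Rightarrow> ennreal"
  assumes [measurable]: "\<Phi> \<in> borel_measurable borel"
  shows "(\<integral>\<^sup>+y\<in>cbox x (x + 1). \<Phi> y \<partial>lborel)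
    = (\<integral>\<^sup>+c\<in>{0..1}. \<integral>\<^sup>+b\<in>{0..1}. \<integral>\<^sup>+a\<in>{0..1}.
         \<Phi> (x + c *\<^sub>R axis 3 1 + b *\<^sub>R axis 2 1 + a *\<^sub>R axis 1 1) \<partial>lborel \<partial>lborel \<partial>lborel)"
proof -
  define G where "G y = \<Phi> (x + y) * indicator (cbox 0 1) y" for y
  have [measurable]: "G \<in> borel_measurable borel"
    unfolding G_def by measurable
  have G_iterated: "G (c *\<^sub>R axis 3 1 + b *\<^sub>R axis 2 1 + a *\<^sub>R axis 1 1)
      = \<Phi> (x + c *\<^sub>R axis 3 1 + b *\<^sub>R axis 2 1 + a *\<^sub>R axis 1 1) * indicator {0..1} a
          * indicator {0..1} b * indicator {0..1} c" for a b c
    by (auto simp: G_def mem_box_cart forall_3 axis_def add.assoc split: split_indicator)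
  have "(\<integral>\<^sup>+y\<in>cbox x (x + 1). \<Phi> y \<partial>lborel) = (\<integral>\<^sup>+y. G y \<partial>lborel)"
  proof -
    have "indicator (cbox x (x + 1)) (x + y) = (indicator (cbox 0 1) y :: ennreal)" for y
      by (auto simp: mem_box_cart split: split_indicator)
    then show ?thesis
      unfolding G_def by (subst lborel_distr_plus[symmetric, of x]) (simp add: nn_integral_distr)
  qed
  also have "\<dots> = (\<integral>\<^sup>+c. \<integral>\<^sup>+b. \<integral>\<^sup>+a. G (c *\<^sub>R axis 3 1 + b *\<^sub>R axis 2 1 + a *\<^sub>R axis 1 1) \<partial>lborel \<partial>lborel \<partial>lborel)"
    by (rule nn_integral_lborel_vec3) measurable
  also have "\<dots> = (\<integral>\<^sup>+c\<in>{0..1}. \<integral>\<^sup>+b\<in>{0..1}. \<integral>\<^sup>+a\<in>{0..1}.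
         \<Phi> (x + c *\<^sub>R axis 3 1 + b *\<^sub>R axis 2 1 + a *\<^sub>R axis 1 1) \<partial>lborel \<partial>lborel \<partial>lborel)"
    unfolding G_iterated by (simp only: nn_integral_multc_finite[OF ennreal_indicator_less_top])
  finally show ?thesis .
qed

lemma emeasure_lborel_unit_cube: "emeasure lborel (cbox x (x + 1 :: real^'n)) = 1"
proof -
  have "(1 :: real^'n) \<bullet> b = 1" if "b \<in> Basis" for b
    using that by (auto simp: Basis_vec_def inner_axis)
  then show ?thesis
    by (subst emeasure_lborel_cbox_eq) (auto simp: inner_add_left intro!: prod.neutral)
qed

lemma norm_diff_le_3_of_mem_unit_cube:
  assumes "y \<in> cbox x (x + 1 :: real^3)"
  shows "norm (x - y) \<le> 3"
proof -
  have "\<bar>(x - y) $ i\<bar> \<le> 1" for i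
  proof -
    have "x $ i \<le> y $ i" "y $ i \<le> x $ i + 1"
      using assms by (simp_all add: mem_box_cart)
    then show ?thesis by simp
  qed
  then have "(\<Sum>i\<in>UNIV. \<bar>(x - y) $ i\<bar>) \<le> 3"
    using sum_bounded_above[of UNIV "\<lambda>i. \<bar>(x - y) $ i\<bar>" 1] by simp
  then show ?thesis
    using norm_le_l1_cart[of "x - y"] by linarith
qed

section \<open>A Sobolev inequality on the unit cube\<close>

lemma abs_le_integral_abs_plus_abs_deriv:
  fixes \<phi> \<phi>' :: "real \<Rightarrow> real"
  assumes deriv: "\<And>s. s \<in> {0..1} \<Longrightarrow> (\<phi> has_real_derivative \<phi>' s) (at s within {0..1})"
    and cont: "continuous_on {0..1} \<phi>'"
  shows "\<bar>\<phi> 0\<bar> \<le> integral {0..1} (\<lambda>s. \<bar>\<phi> s\<bar>) + integral {0..1} (\<lambda>s. \<bar>\<phi>' s\<bar>)"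
proof -
  have cont_phi: "continuous_on {0..1} \<phi>"
    using deriv by (meson DERIV_continuous continuous_on_eq_continuous_within)
  then have "continuous_on {0..1} (\<lambda>s. \<bar>\<phi> s\<bar>)"
    by (rule continuous_on_rabs)
  then obtain s0 where s0: "s0 \<in> {0..1}" and min: "\<And>s. s \<in> {0..1} \<Longrightarrow> \<bar>\<phi> s0\<bar> \<le> \<bar>\<phi> s\<bar>"
    using continuous_attains_inf[OF compact_Icc, of 0 1] by (metis atLeastatMost_empty_iff2 zero_le_one)
  have int_phi: "(\<lambda>s. \<bar>\<phi> s\<bar>) integrable_on {0..1}"
    by (intro integrable_continuous_interval continuous_intros cont_phi)
  have cont_s0: "continuous_on {0..s0} \<phi>'"
    using cont s0 by (auto intro: continuous_on_subset)
  have deriv_s0: "(\<phi> has_real_derivative \<phi>' s) (at s within {0..s0})" if "s \<in> {0..s0}" for s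
    using that s0 by (intro has_field_derivative_subset[OF deriv]) auto
  have "\<bar>\<phi> s0\<bar> \<le> integral {0..1} (\<lambda>s. \<bar>\<phi> s\<bar>)"
    using integral_le[of "\<lambda>_. \<bar>\<phi> s0\<bar>" "{0..1}" "\<lambda>s. \<bar>\<phi> s\<bar>"] min int_phi
    by (simp add: integrable_const_ivl)
  moreover have "\<bar>\<phi> s0 - \<phi> 0\<bar> \<le> integral {0..s0} (\<lambda>s. \<bar>\<phi>' s\<bar>)"
  proof -
    have "(\<phi>' has_integral (\<phi> s0 - \<phi> 0)) {0..s0}"
      using s0 deriv_s0 by (intro fundamental_theorem_of_calculus)
        (auto simp: has_real_derivative_iff_has_vector_derivative[symmetric])
    then show ?thesis
      using cont_s0 integrable_continuous_interval
      by (metis integral_norm_bound_integral integral_unique order_refl real_norm_def continuous_on_rabs)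
  qed
  moreover have "integral {0..s0} (\<lambda>s. \<bar>\<phi>' s\<bar>) \<le> integral {0..1} (\<lambda>s. \<bar>\<phi>' s\<bar>)"
    using s0 cont cont_s0
    by (intro integral_subset_le integrable_continuous_interval continuous_intros) auto
  ultimately show ?thesis by linarith
qed

lemma ennreal_abs_le_nn_integral_unit_interval:
  fixes \<phi> \<phi>' :: "real \<Rightarrow> real"
  assumes "\<And>s. (\<phi> has_real_derivative \<phi>' s) (at s)" and "continuous_on UNIV \<phi>'"
  shows "ennreal \<bar>\<phi> 0\<bar> \<le> (\<integral>\<^sup>+s\<in>{0..1}. ennreal \<bar>\<phi> s\<bar> + ennreal \<bar>\<phi>' s\<bar> \<partial>lborel)"
proof -
  have cont_phi: "continuous_on UNIV \<phi>"
    using assms(1) by (meson DERIV_isCont continuous_at_imp_continuous_on)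
  have "(\<lambda>s. \<bar>\<phi> s\<bar> + \<bar>\<phi>' s\<bar>) integrable_on {0..1}"
    using assms(2) cont_phi
    by (intro integrable_continuous_interval continuous_intros) (auto intro: continuous_on_subset)
  then have "(\<integral>\<^sup>+s\<in>{0..1}. ennreal (\<bar>\<phi> s\<bar> + \<bar>\<phi>' s\<bar>) \<partial>lborel) = integral {0..1} (\<lambda>s. \<bar>\<phi> s\<bar> + \<bar>\<phi>' s\<bar>)"
    by (intro nn_integral_has_integral_lebesgue') auto
  moreover have "\<bar>\<phi> 0\<bar> \<le> integral {0..1} (\<lambda>s. \<bar>\<phi> s\<bar> + \<bar>\<phi>' s\<bar>)"
    using abs_le_integral_abs_plus_abs_deriv[of \<phi> \<phi>'] assms cont_phi
    by (subst integral_add)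
       (auto intro: has_field_derivative_at_within integrable_continuous_interval continuous_intros
             continuous_on_subset)
  ultimately show ?thesis
    by (simp add: ennreal_leI)
qed

lemma sum_Pow_insert:
  assumes "finite A" "a \<notin> A"
  shows "(\<Sum>K\<in>Pow (insert a A). g K) = (\<Sum>K\<in>Pow A. g K + g (insert a K))"
proof -
  have "inj_on (insert a) (Pow A)"
    using assms(2) by (auto simp: inj_on_def)
  moreover have "Pow A \<inter> insert a ` Pow A = {}"
    using assms(2) by auto
  ultimately show ?thesis
    using assms(1) by (simp add: Pow_insert sum.union_disjoint sum.reindex sum.distrib)
qed

lemma sum_Pow_abs_le_nn_integral_segment:
  fixes U :: "'i set \<Rightarrow> 'a::real_normed_vector \<Rightarrow> real"
  assumes A: "finite A" "l \<notin> A"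
    and cont: "\<And>K. continuous_on UNIV (U K)"
    and deriv: "\<And>K s. K \<subseteq> A \<Longrightarrow>
      ((\<lambda>r. U K (p + r *\<^sub>R u)) has_real_derivative U (insert l K) (p + s *\<^sub>R u)) (at s)"
  shows "(\<Sum>K\<in>Pow A. ennreal \<bar>U K p\<bar>)
    \<le> (\<integral>\<^sup>+r\<in>{0..1}. (\<Sum>K\<in>Pow (insert l A). ennreal \<bar>U K (p + r *\<^sub>R u)\<bar>) \<partial>lborel)"
proof -
  have line_cont: "continuous_on UNIV (\<lambda>r. U K (p + r *\<^sub>R u))" for K
    by (rule continuous_on_compose2[OF cont]) (auto intro!: continuous_intros)
  have [measurable]: "(\<lambda>r. U K (p + r *\<^sub>R u)) \<in> borel_measurable borel" for K
    by (rule borel_measurable_continuous_onI[OF line_cont])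
  have "(\<Sum>K\<in>Pow A. ennreal \<bar>U K p\<bar>)
      \<le> (\<Sum>K\<in>Pow A. \<integral>\<^sup>+r\<in>{0..1}. ennreal \<bar>U K (p + r *\<^sub>R u)\<bar> + ennreal \<bar>U (insert l K) (p + r *\<^sub>R u)\<bar> \<partial>lborel)"
    using ennreal_abs_le_nn_integral_unit_interval[OF deriv line_cont] by (intro sum_mono) simp
  also have "\<dots> = (\<integral>\<^sup>+r\<in>{0..1}. (\<Sum>K\<in>Pow A. ennreal \<bar>U K (p + r *\<^sub>R u)\<bar> + ennreal \<bar>U (insert l K) (p + r *\<^sub>R u)\<bar>) \<partial>lborel)"
    by (subst nn_integral_sum[symmetric]) (auto simp: sum_distrib_right)
  also have "\<dots> = (\<integral>\<^sup>+r\<in>{0..1}. (\<Sum>K\<in>Pow (insert l A). ennreal \<bar>U K (p + r *\<^sub>R u)\<bar>) \<partial>lborel)"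
    by (simp add: sum_Pow_insert[OF A])
  finally show ?thesis .
qed

(* U K plays the mixed derivative along the directions in K, taken in the order 3, 2, 1; the
   hypotheses follow that order, so no symmetry of mixed derivatives is needed. *)
lemma ennreal_abs_le_nn_integral_unit_cube:
  fixes U :: "3 set \<Rightarrow> real^3 \<Rightarrow> real"
  assumes cont: "\<And>K. continuous_on UNIV (U K)"
    and d3: "\<And>y s. ((\<lambda>r. U {} (y + r *\<^sub>R axis 3 1)) has_real_derivative U {3} (y + s *\<^sub>R axis 3 1)) (at s)"
    and d2: "\<And>K y s. K \<subseteq> {3} \<Longrightarrow>
      ((\<lambda>r. U K (y + r *\<^sub>R axis 2 1)) has_real_derivative U (insert 2 K) (y + s *\<^sub>R axis 2 1)) (at s)"
    and d1: "\<And>K y s. K \<subseteq> {2, 3} \<Longrightarrow>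
      ((\<lambda>r. U K (y + r *\<^sub>R axis 1 1)) has_real_derivative U (insert 1 K) (y + s *\<^sub>R axis 1 1)) (at s)"
  shows "ennreal \<bar>U {} x\<bar> \<le> (\<integral>\<^sup>+y\<in>cbox x (x + 1). (\<Sum>K\<in>UNIV. ennreal \<bar>U K y\<bar>) \<partial>lborel)"
proof -
  define S where "S A y = (\<Sum>K\<in>Pow A. ennreal \<bar>U K y\<bar>)" for A y
  have step3: "S {} y \<le> (\<integral>\<^sup>+c\<in>{0..1}. S {3} (y + c *\<^sub>R axis 3 1) \<partial>lborel)" for y
    unfolding S_def using d3 by (intro sum_Pow_abs_le_nn_integral_segment cont) auto
  have step2: "S {3} y \<le> (\<integral>\<^sup>+b\<in>{0..1}. S {2, 3} (y + b *\<^sub>R axis 2 1) \<partial>lborel)" for y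
    unfolding S_def using d2 by (intro sum_Pow_abs_le_nn_integral_segment cont) auto
  have step1: "S {2, 3} y \<le> (\<integral>\<^sup>+a\<in>{0..1}. S UNIV (y + a *\<^sub>R axis 1 1) \<partial>lborel)" for y
    unfolding S_def UNIV_3 using d1 by (intro sum_Pow_abs_le_nn_integral_segment cont) auto
  have "ennreal \<bar>U {} x\<bar> = S {} x"
    by (simp add: S_def)
  also have "\<dots> \<le> (\<integral>\<^sup>+c\<in>{0..1}. \<integral>\<^sup>+b\<in>{0..1}. \<integral>\<^sup>+a\<in>{0..1}.
         S UNIV (x + c *\<^sub>R axis 3 1 + b *\<^sub>R axis 2 1 + a *\<^sub>R axis 1 1) \<partial>lborel \<partial>lborel \<partial>lborel)"
  proof -
    have "S {} x \<le> (\<integral>\<^sup>+c\<in>{0..1}. S {3} (x + c *\<^sub>R axis 3 1) \<partial>lborel)"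
      by (rule step3)
    also have "\<dots> \<le> (\<integral>\<^sup>+c\<in>{0..1}. \<integral>\<^sup>+b\<in>{0..1}. S {2, 3} (x + c *\<^sub>R axis 3 1 + b *\<^sub>R axis 2 1) \<partial>lborel \<partial>lborel)"
      by (intro nn_integral_mono mult_right_mono step2) auto
    also have "\<dots> \<le> (\<integral>\<^sup>+c\<in>{0..1}. \<integral>\<^sup>+b\<in>{0..1}. \<integral>\<^sup>+a\<in>{0..1}.
         S UNIV (x + c *\<^sub>R axis 3 1 + b *\<^sub>R axis 2 1 + a *\<^sub>R axis 1 1) \<partial>lborel \<partial>lborel \<partial>lborel)"
      by (intro nn_integral_mono mult_right_mono step1) auto
    finally show ?thesis .
  qed
  also have "\<dots> = (\<integral>\<^sup>+y\<in>cbox x (x + 1). S UNIV y \<partial>lborel)"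
  proof (rule nn_integral_unit_cube_iterated[symmetric])
    have [measurable]: "U K \<in> borel_measurable borel" for K
      using cont by (rule borel_measurable_continuous_onI)
    show "S UNIV \<in> borel_measurable borel"
      unfolding S_def by measurable
  qed
  finally show ?thesis
    by (simp add: S_def)
qed

section \<open>Weights and the Landau kernel\<close>

lemma jb_eq_norm_Pair: "jb z = norm (1::real, z)"
  by (simp add: jb_def norm_Pair)

lemma jb_ge_1: "1 \<le> jb z"
  by (simp add: jb_def)

lemma jb_pos: "0 < jb z"
  using jb_ge_1[of z] by linarith

lemma jb_nonneg [simp]: "0 \<le> jb z" and jb_neq_0 [simp]: "jb z \<noteq> 0"
  using jb_pos[of z] by simp_all

lemma norm_le_jb: "norm z \<le> jb z"
  unfolding jb_def by (rule real_le_rsqrt) simp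

lemma jb_le_jb_add_norm_diff: "jb z \<le> jb z' + norm (z - z')"
proof -
  have "(1::real, z) = (1, z') + (0, z - z')"
    by simp
  then have "norm (1::real, z) \<le> norm (1::real, z') + norm (0::real, z - z')"
    by (metis norm_triangle_ineq)
  then show ?thesis
    by (simp add: jb_eq_norm_Pair norm_Pair)
qed

lemma continuous_on_jb [continuous_intros]:
  "continuous_on S g \<Longrightarrow> continuous_on S (\<lambda>x. jb (g x))"
  unfolding jb_def by (intro continuous_intros)

lemma continuous_on_jb_powr [continuous_intros]:
  "continuous_on S g \<Longrightarrow> continuous_on S (\<lambda>x. jb (g x) powr e)"
  by (intro continuous_on_powr' continuous_on_jb continuous_on_const) auto

lemma add_le_2_mult:
  fixes a b :: real
  assumes "1 \<le> a" "1 \<le> b"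
  shows "a + b \<le> 2 * a * b"
proof -
  have "0 \<le> (a - 1) * (b - 1)" and "1 \<le> a * b"
    using assms mult_mono[of 1 a 1 b] by simp_all
  then show ?thesis by (simp add: algebra_simps)
qed

lemma mult_le_weighted_squares:
  fixes lam a b :: real
  assumes "0 < lam"
  shows "2 * (a * b) \<le> lam * a\<^sup>2 + b\<^sup>2 / lam"
proof -
  have "0 \<le> (lam * a - b)\<^sup>2 / lam"
    using assms by simp
  also have "\<dots> = lam * a\<^sup>2 + b\<^sup>2 / lam - 2 * (a * b)"
    using assms by (simp add: power2_eq_square field_simps)
  finally show ?thesis by simp
qed

lemma powr_weighted_integrand_le:
  fixes p q s a c D n m :: real
  assumes "0 < p" "0 < q" "0 \<le> s" and bound: "s * \<bar>a\<bar> \<le> c * p\<^sup>2 * q"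
  shows "\<bar>s * p powr (2 * n - 1) * q powr (2 * m - 1) * a * D\<^sup>2\<bar>
    \<le> c * (sqrt p * (p powr n * q powr m) * D)\<^sup>2"
proof -
  have p_pow: "p powr (2 * n - 1) * p\<^sup>2 = p * (p powr n)\<^sup>2"
  proof -
    have "p powr (2 * n - 1) * p\<^sup>2 = p powr ((2 * n - 1) + 2)"
      using assms(1) by (simp only: powr_add) (simp add: powr_numeral)
    also have "\<dots> = p powr 1 * (p powr n * p powr n)"
      by (simp only: powr_add[symmetric]) (simp add: algebra_simps)
    finally show ?thesis
      using assms(1) by (simp add: power2_eq_square)
  qed
  have q_pow: "q powr (2 * m - 1) * q = (q powr m)\<^sup>2"
  proof -
    have "q powr (2 * m - 1) * q = q powr ((2 * m - 1) + 1)"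
      using assms(2) by (simp only: powr_add) simp
    also have "\<dots> = q powr m * q powr m"
      by (simp only: powr_add[symmetric]) (simp add: algebra_simps)
    finally show ?thesis
      by (simp add: power2_eq_square)
  qed
  have "\<bar>s * p powr (2 * n - 1) * q powr (2 * m - 1) * a * D\<^sup>2\<bar>
      = (p powr (2 * n - 1) * q powr (2 * m - 1) * D\<^sup>2) * (s * \<bar>a\<bar>)"
    using assms(3) by (simp add: abs_mult mult_ac)
  also have "\<dots> \<le> (p powr (2 * n - 1) * q powr (2 * m - 1) * D\<^sup>2) * (c * p\<^sup>2 * q)"
    by (rule mult_left_mono[OF bound]) simp
  also have "\<dots> = c * (p powr (2 * n - 1) * p\<^sup>2) * (q powr (2 * m - 1) * q) * D\<^sup>2"
    by (simp add: mult_ac)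
  also have "\<dots> = c * (sqrt p * (p powr n * q powr m) * D)\<^sup>2"
    unfolding p_pow q_pow using assms(1) by (simp add: power_mult_distrib mult_ac)
  finally show ?thesis .
qed

lemma abs_acoef_le: "\<bar>acoef \<gamma> i j z\<bar> \<le> 2 * norm z powr (\<gamma> + 2)"
proof (cases "z = 0")
  case False
  have "\<bar>z$i * z$j\<bar> \<le> norm z * norm z"
    by (simp add: abs_mult mult_mono component_le_norm_cart)
  then have "\<bar>z$i * z$j / (norm z)\<^sup>2\<bar> \<le> 1"
    using False by (simp add: abs_divide power2_eq_square divide_le_eq_1)
  then have "\<bar>(if i = j then 1 else 0) - z$i * z$j / (norm z)\<^sup>2\<bar> \<le> 2"
    by (auto simp: abs_if split: if_splits)
  then show ?thesis
    by (simp add: acoef_def abs_mult mult_right_mono)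
qed (simp add: acoef_def)

lemma norm_diff_le_2_jb_mult: "norm (z - z') \<le> 2 * jb z * jb z'"
proof -
  have "norm (z - z') \<le> jb z + jb z'"
    using norm_triangle_ineq4[of z z'] norm_le_jb[of z] norm_le_jb[of z'] by linarith
  also have "\<dots> \<le> 2 * jb z * jb z'"
    by (intro add_le_2_mult jb_ge_1)
  finally show ?thesis .
qed

lemma time_mult_norm_powr_le_jb:
  fixes v w x :: "real^3" and t \<gamma> :: real
  assumes "-1 \<le> \<gamma>" "\<gamma> \<le> 1"
  shows "(1 + t) * norm (v - w) powr (\<gamma> + 2)
    \<le> 8 * (jb v)\<^sup>2 * (jb w)\<^sup>2 * jb (x - (t + 1) *\<^sub>R v) * jb (x - (t + 1) *\<^sub>R w)"
proof (cases "v = w \<or> t < -1")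
  case True
  then have "(1 + t) * norm (v - w) powr (\<gamma> + 2) \<le> 0"
    by (auto intro: mult_nonpos_nonneg)
  then show ?thesis
    by (smt (verit) jb_nonneg mult_nonneg_nonneg zero_le_power2)
next
  case False
  define r where "r = norm (v - w)"
  have r: "0 < r" and t: "-1 \<le> t"
    using False by (auto simp: r_def)
  have "(x - (t + 1) *\<^sub>R v) - (x - (t + 1) *\<^sub>R w) = - ((t + 1) *\<^sub>R (v - w))"
    by (simp add: algebra_simps)
  then have "(1 + t) * r = norm ((x - (t + 1) *\<^sub>R v) - (x - (t + 1) *\<^sub>R w))"
    using t by (simp add: r_def)
  also have "\<dots> \<le> 2 * jb (x - (t + 1) *\<^sub>R v) * jb (x - (t + 1) *\<^sub>R w)"
    by (rule norm_diff_le_2_jb_mult)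
  finally have time: "(1 + t) * r \<le> 2 * jb (x - (t + 1) *\<^sub>R v) * jb (x - (t + 1) *\<^sub>R w)" .
  have one_le: "1 \<le> 2 * jb v * jb w"
    using mult_mono[OF jb_ge_1 jb_ge_1, of v w] by simp
  have "r powr (\<gamma> + 1) \<le> (2 * jb v * jb w) powr (\<gamma> + 1)"
    using r norm_diff_le_2_jb_mult[of v w] assms by (intro powr_mono2) (auto simp: r_def)
  also have "\<dots> \<le> (2 * jb v * jb w) powr 2"
    using one_le assms by (intro powr_mono) auto
  also have "\<dots> = 4 * (jb v)\<^sup>2 * (jb w)\<^sup>2"
    by (simp add: powr_numeral power_mult_distrib)
  finally have velocity: "r powr (\<gamma> + 1) \<le> 4 * (jb v)\<^sup>2 * (jb w)\<^sup>2" .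
  have "(1 + t) * r powr (\<gamma> + 2) = r powr (\<gamma> + 1) * ((1 + t) * r)"
    using r by (simp add: powr_add power2_eq_square mult_ac)
  also have "\<dots> \<le> (4 * (jb v)\<^sup>2 * (jb w)\<^sup>2) * (2 * jb (x - (t + 1) *\<^sub>R v) * jb (x - (t + 1) *\<^sub>R w))"
    using r t by (intro mult_mono velocity time) auto
  finally show ?thesis
    by (simp add: r_def mult_ac)
qed

lemma time_mult_abs_acoef_le_jb:
  fixes v w x :: "real^3" and t \<gamma> :: real
  assumes "-1 \<le> \<gamma>" "\<gamma> \<le> 1" "-1 \<le> t"
  shows "(1 + t) * \<bar>acoef \<gamma> i j (v - w)\<bar>
    \<le> 16 * (jb v)\<^sup>2 * (jb w)\<^sup>2 * jb (x - (t + 1) *\<^sub>R v) * jb (x - (t + 1) *\<^sub>R w)"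
proof -
  have "(1 + t) * \<bar>acoef \<gamma> i j (v - w)\<bar> \<le> 2 * ((1 + t) * norm (v - w) powr (\<gamma> + 2))"
    using mult_left_mono[OF abs_acoef_le[of \<gamma> i j "v - w"], of "1 + t"] assms(3) by simp
  also have "\<dots> \<le> 2 * (8 * (jb v)\<^sup>2 * (jb w)\<^sup>2 * jb (x - (t + 1) *\<^sub>R v) * jb (x - (t + 1) *\<^sub>R w))"
    using time_mult_norm_powr_le_jb[OF assms(1,2), of t v w x] by simp
  finally show ?thesis
    by simp
qed

lemma nn_integral_inverse_1_plus_square_le:
  "(\<integral>\<^sup>+s. ennreal (1 / (1 + s\<^sup>2)) \<partial>lborel) \<le> ennreal pi"
proof -
  define h :: "real \<Rightarrow> real" where "h s = 1 / (1 + s\<^sup>2)" for s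
  have [measurable]: "h \<in> borel_measurable borel"
    unfolding h_def by measurable
  have half: "(\<integral>\<^sup>+s. ennreal (h s) * indicator {0..} s \<partial>lborel) = ennreal (pi / 2)"
  proof -
    have "(\<integral>\<^sup>+s. ennreal (h s) * indicator {0..} s \<partial>lborel) = ennreal (pi / 2 - arctan 0)"
    proof (rule nn_integral_FTC_atLeast)
      show "(arctan \<longlongrightarrow> pi / 2) at_top"
        by (rule tendsto_arctan_at_top)
      show "DERIV arctan s :> h s" for s
        unfolding h_def using DERIV_arctan[of s] by (simp add: divide_inverse)
    qed (auto simp: h_def add_pos_nonneg less_imp_le)
    then show ?thesis by simp
  qed
  have "(\<integral>\<^sup>+s. ennreal (h s) * indicator {..0} s \<partial>lborel)
      = ennreal \<bar>-1\<bar> * (\<integral>\<^sup>+s. ennreal (h (0 + -1 * s)) * indicator {..0} (0 + -1 * s) \<partial>lborel)"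
    by (rule nn_integral_real_affine) auto
  also have "\<dots> = (\<integral>\<^sup>+s. ennreal (h s) * indicator {0..} s \<partial>lborel)"
    by (simp, intro nn_integral_cong) (auto simp: h_def split: split_indicator)
  finally have mirror: "(\<integral>\<^sup>+s. ennreal (h s) * indicator {..0} s \<partial>lborel) = ennreal (pi / 2)"
    using half by simp
  have "(\<integral>\<^sup>+s. ennreal (h s) \<partial>lborel)
      \<le> (\<integral>\<^sup>+s. ennreal (h s) * indicator {0..} s + ennreal (h s) * indicator {..0} s \<partial>lborel)"
    by (intro nn_integral_mono) (auto split: split_indicator)
  also have "\<dots> = ennreal pi"
    by (simp add: nn_integral_add half mirror flip: ennreal_plus)
  finally show ?thesis
    by (simp add: h_def)
qed

lemma jb_powr_neg6_le_prod: "jb w powr (-6) \<le> (\<Prod>i\<in>UNIV. 1 / (1 + (w$i)\<^sup>2))"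
proof -
  have norm_sq: "(norm w)\<^sup>2 = (w$1)\<^sup>2 + (w$2)\<^sup>2 + (w$3)\<^sup>2"
    unfolding norm_vec_def L2_set_def by (simp add: sum_3 real_norm_def)
  have "jb w powr (-6) = 1 / (jb w ^ 2) ^ 3"
    by (simp add: powr_minus divide_inverse powr_realpow flip: power_mult)
  then have "jb w powr (-6) = 1 / (1 + (norm w)\<^sup>2) ^ 3"
    by (simp add: jb_def)
  also have "\<dots> \<le> 1 / ((1 + (w$1)\<^sup>2) * (1 + (w$2)\<^sup>2) * (1 + (w$3)\<^sup>2))"
    unfolding power3_eq_cube using norm_sq
    by (intro divide_left_mono mult_mono mult_pos_pos) (auto intro: add_pos_nonneg)
  also have "\<dots> = (\<Prod>i\<in>UNIV. 1 / (1 + (w$i)\<^sup>2))"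
    unfolding UNIV_3 by (simp add: ac_simps)
  finally show ?thesis .
qed

lemma nn_integral_jb_powr_neg6_le: "(\<integral>\<^sup>+(w::real^3). ennreal (jb w powr (-6)) \<partial>lborel) \<le> ennreal (pi ^ 3)"
proof -
  have "(\<integral>\<^sup>+(w::real^3). ennreal (jb w powr (-6)) \<partial>lborel)
      \<le> (\<integral>\<^sup>+(w::real^3). (\<Prod>b\<in>Basis. ennreal (1 / (1 + (w \<bullet> b)\<^sup>2))) \<partial>lborel)"
  proof (rule nn_integral_mono)
    fix w :: "real^3"
    have "(\<Prod>b\<in>Basis. 1 / (1 + (w \<bullet> b)\<^sup>2)) = (\<Prod>i\<in>UNIV. 1 / (1 + (w$i)\<^sup>2))"
      by (rule prod_Basis_vec)
    then show "ennreal (jb w powr (-6)) \<le> (\<Prod>b\<in>Basis. ennreal (1 / (1 + (w \<bullet> b)\<^sup>2)))"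
      using jb_powr_neg6_le_prod[of w] by (simp add: prod_ennreal ennreal_leI add_pos_nonneg less_imp_le)
  qed
  also have "\<dots> = (\<Prod>b\<in>(Basis::(real^3) set). (\<integral>\<^sup>+s. ennreal (1 / (1 + s\<^sup>2)) \<partial>lborel))"
    by (rule nn_integral_lborel_prod) auto
  also have "\<dots> \<le> ennreal pi ^ 3"
    using nn_integral_inverse_1_plus_square_le by (simp add: power_mono)
  finally show ?thesis
    by (simp add: ennreal_power)
qed

type_synonym phase_point = "real \<times> (real^3) \<times> (real^3)"

definition xdir :: "3 \<Rightarrow> phase_point" where
  "xdir l = (0, axis l 1, 0)"

definition xdirs :: "(3 \<Rightarrow> nat) \<Rightarrow> phase_point list" where
  "xdirs k = replicate (k 1) (xdir 1) @ replicate (k 2) (xdir 2) @ replicate (k 3) (xdir 3)"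

lemma xdir_in_Basis: "xdir l \<in> Basis"
  by (auto simp: xdir_def Basis_prod_def Basis_vec_def)

lemma set_xdirs_subset: "set (xdirs k) \<subseteq> xdir ` UNIV"
  by (auto simp: xdirs_def)

lemma set_xdirs_subset_Basis: "set (xdirs k) \<subseteq> Basis"
  using set_xdirs_subset xdir_in_Basis by blast

lemma add_scaleR_xdir: "(t, x, v) + s *\<^sub>R xdir l = (t, x + s *\<^sub>R axis l 1, v)"
  by (simp add: xdir_def)

lemma iter_pdir_Cons: "iter_pdir (u # us) H = pdir (iter_pdir us H) u"
  by (simp add: iter_pdir_def)

lemma iter_pdir_append: "iter_pdir (us @ ws) H = iter_pdir us (iter_pdir ws H)"
  by (simp add: iter_pdir_def)

lemma iter_pdir_replicate: "iter_pdir (replicate n u) H = ((\<lambda>H. pdir H u) ^^ n) H"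
  by (induction n) (simp_all add: iter_pdir_def)

lemma multi_zero: "multi P (\<lambda>_. 0) h = h"
  by (simp add: multi_def)

lemma multi_dx_eq_iter_pdir:
  "(\<lambda>(t, x, v). multi dx k h t x v) = iter_pdir (xdirs k) (\<lambda>(t, x, v). h t x v)"
proof -
  have dx_pow: "(\<lambda>(t, x, v). (dx l ^^ n) h t x v) = ((\<lambda>H. pdir H (xdir l)) ^^ n) (\<lambda>(t, x, v). h t x v)"
    for l n and h :: phase_fun
    by (induction n) (auto simp: fun_eq_iff dx_def pdir_def add_scaleR_xdir)
  show ?thesis
    by (simp add: multi_def xdirs_def iter_pdir_append iter_pdir_replicate flip: dx_pow)
qed

lemma has_real_derivative_pdir_line:
  assumes "H differentiable (at (p + s *\<^sub>R u))"
  shows "((\<lambda>r. H (p + r *\<^sub>R u)) has_real_derivative pdir H u (p + s *\<^sub>R u)) (at s)"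
proof -
  from assms obtain D where D: "(H has_derivative D) (at (p + s *\<^sub>R u))"
    by (auto simp: differentiable_def)
  have line: "((\<lambda>r. H (q + r *\<^sub>R u)) has_real_derivative D u) (at s')" if "q + s' *\<^sub>R u = p + s *\<^sub>R u" for q s'
  proof -
    have "((\<lambda>r. q + r *\<^sub>R u) has_derivative (\<lambda>r. r *\<^sub>R u)) (at s')"
      by (auto intro!: derivative_eq_intros)
    then have "((\<lambda>r. H (q + r *\<^sub>R u)) has_derivative (\<lambda>r. D (r *\<^sub>R u))) (at s')"
      using D that by (auto intro: has_derivative_compose[of "\<lambda>r. q + r *\<^sub>R u", unfolded o_def])
    moreover have "(\<lambda>r. D (r *\<^sub>R u)) = (\<lambda>r. r * D u)"
      using has_derivative_linear[OF D] by (auto simp: linear_scale fun_eq_iff)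
    ultimately show ?thesis
      by (simp add: has_field_derivative_def mult.commute[of _ "D u"])
  qed
  have "pdir H u (p + s *\<^sub>R u) = D u"
    unfolding pdir_def by (rule DERIV_imp_deriv) (rule line, simp)
  then show ?thesis
    using line[of p s] by simp
qed

lemma smooth_on_differentiable_iter_pdir:
  assumes "smooth_on S H" "open S" "p \<in> S" "set us \<subseteq> Basis"
  shows "iter_pdir us H differentiable (at p)"
  using assms unfolding smooth_on_def by (meson differentiable_on_eq_differentiable_at)

lemma smooth_on_continuous_iter_pdir:
  assumes "smooth_on S H" "set us \<subseteq> Basis"
  shows "continuous_on S (iter_pdir us H)"
  using assms unfolding smooth_on_def by blast

lemma iter_pdir_mult_invariant:
  fixes H E :: "'a::euclidean_space \<Rightarrow> real"
  assumes smooth: "smooth_on S H" and "open S" and V: "V \<subseteq> Basis"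
    and invariant: "\<And>u p s. u \<in> V \<Longrightarrow> p \<in> S \<Longrightarrow> p + s *\<^sub>R u \<in> S \<and> E (p + s *\<^sub>R u) = E p"
    and "set us \<subseteq> V" "p \<in> S"
  shows "iter_pdir us (\<lambda>q. E q * H q) p = E p * iter_pdir us H p"
  using assms(5,6)
proof (induction us arbitrary: p)
  case Nil
  then show ?case by (simp add: iter_pdir_def)
next
  case (Cons u us)
  then have u: "u \<in> V" and us: "set us \<subseteq> V"
    by auto
  have "iter_pdir us H differentiable (at (p + 0 *\<^sub>R u))"
    using Cons.prems us V by (intro smooth_on_differentiable_iter_pdir[OF smooth \<open>open S\<close>]) auto
  then have deriv: "((\<lambda>r. iter_pdir us H (p + r *\<^sub>R u)) has_real_derivative
      pdir (iter_pdir us H) u p) (at 0)"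
    using has_real_derivative_pdir_line by fastforce
  have "iter_pdir (u # us) (\<lambda>q. E q * H q) p = deriv (\<lambda>r. E p * iter_pdir us H (p + r *\<^sub>R u)) 0"
    using Cons.IH[OF us] invariant[OF u Cons.prems(2)] by (simp add: iter_pdir_Cons pdir_def)
  also have "\<dots> = E p * pdir (iter_pdir us H) u p"
    using deriv by (intro DERIV_imp_deriv) (auto intro!: derivative_eq_intros)
  finally show ?case
    by (simp add: iter_pdir_Cons)
qed

definition set_mindex :: "3 set \<Rightarrow> 3 \<Rightarrow> nat" where
  "set_mindex K l = (if l \<in> K then 1 else 0)"

lemma mlen_zero: "mlen (\<lambda>_. 0) = 0"
  by (simp add: mlen_def)

lemma mlen_set_mindex: "mlen (set_mindex K) = card K"
  by (simp add: mlen_def set_mindex_def sum.If_cases)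

lemma card_le_3: "card (K :: 3 set) \<le> 3"
  using card_mono[of "UNIV :: 3 set" K] by simp

lemma jb_powr_5_mult_jb_le_Wt:
  "jb v powr 5 * jb (x - (t + 1) *\<^sub>R v) \<le> Wt (set_mindex K) (\<lambda>_. 0) (\<lambda>_. 0) t x v"
proof -
  have "jb v powr 5 \<le> jb v powr nu (set_mindex K) (\<lambda>_. 0) (\<lambda>_. 0)"
    using card_le_3[of K] jb_ge_1[of v] by (intro powr_mono) (auto simp: nu_def mlen_set_mindex mlen_zero)
  moreover have "jb (x - (t + 1) *\<^sub>R v) \<le> jb (x - (t + 1) *\<^sub>R v) powr omega (set_mindex K) (\<lambda>_. 0) (\<lambda>_. 0)"
    using card_le_3[of K] jb_ge_1[of "x - (t + 1) *\<^sub>R v"] powr_mono[of 1 _ "jb (x - (t + 1) *\<^sub>R v)"]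
    by (auto simp: omega_def mlen_set_mindex mlen_zero)
  ultimately show ?thesis
    unfolding Wt_def by (intro mult_mono) auto
qed

lemma xdirs_set_mindex_insert:
  "xdirs (set_mindex {3}) = xdir 3 # xdirs (set_mindex {})"
  "K \<subseteq> {3} \<Longrightarrow> xdirs (set_mindex (insert 2 K)) = xdir 2 # xdirs (set_mindex K)"
  "K \<subseteq> {2, 3} \<Longrightarrow> xdirs (set_mindex (insert 1 K)) = xdir 1 # xdirs (set_mindex K)"
  by (auto simp: xdirs_def set_mindex_def)

lemma finite_idx10: "finite idx10"
proof -
  have le_mlen: "k l \<le> mlen k" for k :: "3 \<Rightarrow> nat" and l
    unfolding mlen_def by (rule member_le_sum) auto
  let ?A = "PiE (UNIV :: 3 set) (\<lambda>_. {..10::nat})"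
  have "idx10 \<subseteq> ?A \<times> ?A \<times> ?A"
    by (force simp: idx10_def PiE_def extensional_def intro: order.trans[OF le_mlen])
  moreover have "finite ?A"
    by (intro finite_PiE) auto
  ultimately show ?thesis
    by (blast intro: finite_subset)
qed

section \<open>The bootstrap setting\<close>

locale bootstrap =
  fixes d0 \<delta> \<epsilon> Tb :: real and f :: phase_fun
  assumes d0_nonneg: "0 \<le> d0" and eps_pos: "0 < \<epsilon>"
    and smooth: "smooth_on ({..<Tb} \<times> UNIV) (\<lambda>(t, x, v). f t x v)"
    and f_nonneg: "\<And>t x v. 0 \<le> t \<Longrightarrow> t < Tb \<Longrightarrow> 0 \<le> f t x v"
    and energy: "\<And>T. 0 \<le> T \<Longrightarrow> T < Tb \<Longrightarrow> energy_sq \<delta> T (gfun d0 \<delta> f) \<le> ennreal ((\<epsilon> powr (3/4))\<^sup>2)"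
begin

definition xderiv :: "3 set \<Rightarrow> phase_fun" where
  "xderiv K t x v = iter_pdir (xdirs (set_mindex K)) (\<lambda>(t, x, v). f t x v) (t, x, v)"

lemma xderiv_empty: "xderiv {} = f"
  by (simp add: fun_eq_iff xderiv_def xdirs_def set_mindex_def iter_pdir_def)

lemma open_domain: "open ({..<Tb} \<times> (UNIV :: ((real^3) \<times> (real^3)) set))"
  by (intro open_Times) auto

lemma continuous_on_xderiv:
  assumes "t < Tb"
  shows "continuous_on UNIV (\<lambda>(x, v). xderiv K t x v)"
proof -
  have H: "continuous_on ({..<Tb} \<times> UNIV) (iter_pdir (xdirs (set_mindex K)) (\<lambda>(t, x, v). f t x v))"
    by (rule smooth_on_continuous_iter_pdir[OF smooth set_xdirs_subset_Basis])
  have embed: "continuous_on UNIV (\<lambda>(x :: real^3, v :: real^3). (t, x, v))"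
    by (auto intro!: continuous_intros simp: split_beta)
  have "continuous_on UNIV
      (\<lambda>q. iter_pdir (xdirs (set_mindex K)) (\<lambda>(t, x, v). f t x v) ((\<lambda>(x, v). (t, x, v)) q))"
    by (rule continuous_on_compose2[OF H embed]) (auto simp: assms)
  then show ?thesis
    by (simp add: xderiv_def split_beta)
qed

lemma xderiv_has_real_derivative_line:
  assumes "t < Tb" and dirs: "xdirs (set_mindex (insert l K)) = xdir l # xdirs (set_mindex K)"
  shows "((\<lambda>r. xderiv K t (x + r *\<^sub>R axis l 1) v) has_real_derivative
      xderiv (insert l K) t (x + s *\<^sub>R axis l 1) v) (at s)"
proof -
  let ?H = "iter_pdir (xdirs (set_mindex K)) (\<lambda>(t, x, v). f t x v)"
  have "?H differentiable (at ((t, x, v) + s *\<^sub>R xdir l))"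
    using assms(1)
    by (intro smooth_on_differentiable_iter_pdir[OF smooth open_domain _ set_xdirs_subset_Basis])
       (simp add: add_scaleR_xdir)
  from has_real_derivative_pdir_line[OF this] show ?thesis
    by (simp add: xderiv_def add_scaleR_xdir dirs iter_pdir_Cons)
qed

lemma abs_f_le_nn_integral_cube:
  assumes "t < Tb"
  shows "ennreal \<bar>f t x v\<bar> \<le> (\<integral>\<^sup>+y\<in>cbox x (x + 1). (\<Sum>K\<in>UNIV. ennreal \<bar>xderiv K t y v\<bar>) \<partial>lborel)"
proof -
  have "continuous_on UNIV (\<lambda>y. xderiv K t y v)" for K
    using continuous_on_xderiv[OF assms, of K]
    by (rule continuous_on_compose2[of _ "\<lambda>(x, v). xderiv K t x v" _ "\<lambda>y. (y, v)", simplified])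
       (auto intro!: continuous_intros)
  moreover note line = xderiv_has_real_derivative_line[OF assms]
  ultimately have "ennreal \<bar>xderiv {} t x v\<bar>
      \<le> (\<integral>\<^sup>+y\<in>cbox x (x + 1). (\<Sum>K\<in>UNIV. ennreal \<bar>xderiv K t y v\<bar>) \<partial>lborel)"
    using xdirs_set_mindex_insert
    by (intro ennreal_abs_le_nn_integral_unit_cube[of "\<lambda>K y. xderiv K t y v"]) (auto intro!: line)
  then show ?thesis
    by (simp only: xderiv_empty)
qed

lemma Dop_gfun_eq:
  assumes "t < Tb"
  shows "Dop (set_mindex K) (\<lambda>_. 0) (\<lambda>_. 0) (gfun d0 \<delta> f) t x v = exp (dfun d0 \<delta> t * jb v) * xderiv K t x v"
proof -
  define E :: "phase_point \<Rightarrow> real" where "E = (\<lambda>(t, x, v). exp (dfun d0 \<delta> t * jb v))"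
  have "Dop (set_mindex K) (\<lambda>_. 0) (\<lambda>_. 0) (gfun d0 \<delta> f) t x v
      = iter_pdir (xdirs (set_mindex K)) (\<lambda>q. E q * (\<lambda>(t, x, v). f t x v) q) (t, x, v)"
    using fun_cong[OF multi_dx_eq_iter_pdir[of "set_mindex K" "gfun d0 \<delta> f"], of "(t, x, v)"]
    by (simp add: Dop_def multi_zero gfun_def E_def split_beta')
  also have "\<dots> = E (t, x, v) * xderiv K t x v"
    unfolding xderiv_def
  proof (rule iter_pdir_mult_invariant[OF smooth open_domain _ _ set_xdirs_subset])
    show "xdir ` UNIV \<subseteq> Basis"
      using xdir_in_Basis by blast
    show "(t, x, v) \<in> {..<Tb} \<times> UNIV"
      using assms by simp
    fix u p s assume "u \<in> xdir ` UNIV" "p \<in> {..<Tb} \<times> (UNIV :: ((real^3) \<times> (real^3)) set)"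
    then show "p + s *\<^sub>R u \<in> {..<Tb} \<times> UNIV \<and> E (p + s *\<^sub>R u) = E p"
      by (cases p) (auto simp: xdir_def E_def)
  qed
  finally show ?thesis
    by (simp add: E_def)
qed

lemma energy_term_le:
  assumes "mlen a + mlen b + mlen s \<le> 10" "0 \<le> T" "T < Tb"
  shows "ennreal ((1 + T) powr (- real (mlen b) * (1 + \<delta>))) *
      ((SUP t\<in>{0..<T}. L2xv_sq (\<lambda>t x v. Wt a b s t x v * Dop a b s (gfun d0 \<delta> f) t x v) t)
       + (\<integral>\<^sup>+t\<in>{0..<T}. L2xv_sq
            (\<lambda>t x v. sqrt (jb v) * Wt a b s t x v * Dop a b s (gfun d0 \<delta> f) t x v) t \<partial>lborel))
    \<le> ennreal (\<epsilon> powr (3/2))"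
proof -
  have "(a, b, s) \<in> idx10"
    using assms(1) by (simp add: idx10_def)
  then have "ennreal ((1 + T) powr (- real (mlen b) * (1 + \<delta>))) *
      ((SUP t\<in>{0..<T}. L2xv_sq (\<lambda>t x v. Wt a b s t x v * Dop a b s (gfun d0 \<delta> f) t x v) t)
       + (\<integral>\<^sup>+t\<in>{0..<T}. L2xv_sq
            (\<lambda>t x v. sqrt (jb v) * Wt a b s t x v * Dop a b s (gfun d0 \<delta> f) t x v) t \<partial>lborel))
    \<le> energy_sq \<delta> T (gfun d0 \<delta> f)"
    unfolding energy_sq_def by (simp add: sum.remove[OF finite_idx10])
  also have "\<dots> \<le> ennreal ((\<epsilon> powr (3/4))\<^sup>2)"
    using energy assms by simp
  also have "(\<epsilon> powr (3/4))\<^sup>2 = \<epsilon> powr (3/2)"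
    by (simp add: power2_eq_square flip: powr_add)
  finally show ?thesis .
qed

definition weighted_xderiv :: "3 set \<Rightarrow> phase_fun" where
  "weighted_xderiv K t x v
     = Wt (set_mindex K) (\<lambda>_. 0) (\<lambda>_. 0) t x v * Dop (set_mindex K) (\<lambda>_. 0) (\<lambda>_. 0) (gfun d0 \<delta> f) t x v"

lemma L2xv_sq_weighted_xderiv_le:
  assumes "0 \<le> t" "t < Tb"
  shows "L2xv_sq (weighted_xderiv K) t \<le> ennreal (\<epsilon> powr (3/2))"
proof -
  define T where "T = (t + Tb) / 2"
  have T: "0 \<le> T" "t < T" "T < Tb"
    using assms by (auto simp: T_def)
  have "L2xv_sq (weighted_xderiv K) t \<le> (SUP t\<in>{0..<T}. L2xv_sq (weighted_xderiv K) t)"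
    using assms T by (intro SUP_upper) auto
  also have "\<dots> \<le> ennreal ((1 + T) powr (- real (mlen (\<lambda>_. 0 :: nat)) * (1 + \<delta>))) *
      ((SUP t\<in>{0..<T}. L2xv_sq (weighted_xderiv K) t)
       + (\<integral>\<^sup>+t\<in>{0..<T}. L2xv_sq (\<lambda>t x v. sqrt (jb v) * weighted_xderiv K t x v) t \<partial>lborel))"
    using T by (simp add: mlen_zero)
  also have "\<dots> \<le> ennreal (\<epsilon> powr (3/2))"
    using energy_term_le[of "set_mindex K" "\<lambda>_. 0" "\<lambda>_. 0" T] T card_le_3[of K]
    by (simp add: weighted_xderiv_def[abs_def] mult.assoc mlen_set_mindex mlen_zero)
  finally show ?thesis .
qed

lemma weighted_xderiv_eq:
  "t < Tb \<Longrightarrow> weighted_xderiv K t x v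
     = Wt (set_mindex K) (\<lambda>_. 0) (\<lambda>_. 0) t x v * exp (dfun d0 \<delta> t * jb v) * xderiv K t x v"
  by (simp add: weighted_xderiv_def Dop_gfun_eq)

lemma continuous_on_weighted_xderiv:
  assumes "t < Tb"
  shows "continuous_on UNIV (\<lambda>p. weighted_xderiv K t (fst p) (snd p))"
proof -
  have "continuous_on UNIV (\<lambda>p::(real^3) \<times> (real^3). xderiv K t (fst p) (snd p))"
    using continuous_on_xderiv[OF assms] by (simp add: split_beta)
  then have "continuous_on UNIV (\<lambda>p::(real^3) \<times> (real^3).
      Wt (set_mindex K) (\<lambda>_. 0) (\<lambda>_. 0) t (fst p) (snd p) * exp (dfun d0 \<delta> t * jb (snd p)) * xderiv K t (fst p) (snd p))"
    unfolding Wt_def by (intro continuous_intros)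
  then show ?thesis
    using assms by (simp add: weighted_xderiv_eq)
qed

lemma borel_measurable_weighted_xderiv_sq:
  assumes "t < Tb"
  shows "(\<lambda>(x, v). ennreal ((weighted_xderiv K t x v)\<^sup>2)) \<in> borel_measurable (lborel \<Otimes>\<^sub>M lborel)"
    and "(\<lambda>(v, x). ennreal ((weighted_xderiv K t x v)\<^sup>2)) \<in> borel_measurable (lborel \<Otimes>\<^sub>M lborel)"
    and "(\<lambda>x. ennreal ((weighted_xderiv K t x v)\<^sup>2)) \<in> borel_measurable lborel"
proof -
  have cont: "continuous_on UNIV (\<lambda>p. (weighted_xderiv K t (fst p) (snd p))\<^sup>2)"
    using continuous_on_weighted_xderiv[OF assms] by (intro continuous_intros)
  show "(\<lambda>(x, v). ennreal ((weighted_xderiv K t x v)\<^sup>2)) \<in> borel_measurable (lborel \<Otimes>\<^sub>M lborel)"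
    and "(\<lambda>(v, x). ennreal ((weighted_xderiv K t x v)\<^sup>2)) \<in> borel_measurable (lborel \<Otimes>\<^sub>M lborel)"
    using borel_measurable_lborel_pair_of_continuous[OF cont] by simp_all
  then show "(\<lambda>x. ennreal ((weighted_xderiv K t x v)\<^sup>2)) \<in> borel_measurable lborel"
    by measurable
qed

lemma jb_powr_5_mult_abs_xderiv_le:
  assumes "0 \<le> t" "t < Tb"
  shows "jb v powr 5 * jb (x - (t + 1) *\<^sub>R v) * \<bar>xderiv K t x v\<bar> \<le> \<bar>weighted_xderiv K t x v\<bar>"
proof -
  let ?W = "Wt (set_mindex K) (\<lambda>_. 0) (\<lambda>_. 0) t x v"
  have "1 \<le> exp (dfun d0 \<delta> t * jb v)"
    using d0_nonneg assms(1) by (simp add: dfun_def)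
  then have "?W \<le> ?W * exp (dfun d0 \<delta> t * jb v)"
    using mult_left_mono[of 1 "exp (dfun d0 \<delta> t * jb v)" ?W] by (simp add: Wt_def)
  then have "jb v powr 5 * jb (x - (t + 1) *\<^sub>R v) \<le> ?W * exp (dfun d0 \<delta> t * jb v)"
    using jb_powr_5_mult_jb_le_Wt[of v x t K] by linarith
  then have "jb v powr 5 * jb (x - (t + 1) *\<^sub>R v) * \<bar>xderiv K t x v\<bar>
      \<le> ?W * exp (dfun d0 \<delta> t * jb v) * \<bar>xderiv K t x v\<bar>"
    by (rule mult_right_mono) simp
  then show ?thesis
    using assms(2) by (simp add: weighted_xderiv_eq abs_mult Wt_def)
qed

lemma jb_weight_mult_abs_xderiv_le:
  assumes "0 < lam" "0 \<le> t" "t < Tb" "norm (x - y) \<le> 3"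
  shows "(jb v)\<^sup>2 * jb (x - (t + 1) *\<^sub>R v) * \<bar>xderiv K t y v\<bar>
    \<le> 2 * lam * jb v powr (-6) + 2 / lam * (weighted_xderiv K t y v)\<^sup>2"
proof -
  let ?z = "y - (t + 1) *\<^sub>R v"
  let ?B = "jb v powr 5 * jb ?z * \<bar>xderiv K t y v\<bar>"
  have "jb (x - (t + 1) *\<^sub>R v) \<le> jb ?z + norm (x - y)"
    using jb_le_jb_add_norm_diff[of "x - (t + 1) *\<^sub>R v" ?z] by simp
  also have "\<dots> \<le> 4 * jb ?z"
    using assms(4) jb_ge_1[of ?z] by linarith
  finally have shift: "jb (x - (t + 1) *\<^sub>R v) \<le> 4 * jb ?z" .
  have pow: "jb v powr (-3) * jb v powr 5 = (jb v)\<^sup>2"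
    by (simp only: powr_add[symmetric]) (simp add: powr_numeral)
  have "(jb v)\<^sup>2 * jb (x - (t + 1) *\<^sub>R v) * \<bar>xderiv K t y v\<bar> \<le> (jb v)\<^sup>2 * (4 * jb ?z) * \<bar>xderiv K t y v\<bar>"
    using shift by (intro mult_right_mono mult_left_mono) auto
  also have "\<dots> = 4 * (jb v powr (-3) * ?B)"
    by (simp only: pow[symmetric] mult_ac)
  also have "\<dots> \<le> 2 * (lam * (jb v powr (-3))\<^sup>2 + ?B\<^sup>2 / lam)"
    using mult_left_mono[OF mult_le_weighted_squares[OF assms(1), of "jb v powr (-3)" ?B], of 2]
    by simp
  also have "\<dots> \<le> 2 * lam * jb v powr (-6) + 2 / lam * (weighted_xderiv K t y v)\<^sup>2"
  proof -
    have "?B\<^sup>2 \<le> \<bar>weighted_xderiv K t y v\<bar>\<^sup>2"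
      using jb_powr_5_mult_abs_xderiv_le[OF assms(2,3)] by (intro power_mono) simp_all
    moreover have "(jb v powr (-3))\<^sup>2 = jb v powr (-6)"
      by (simp add: power2_eq_square flip: powr_add)
    ultimately show ?thesis
      using assms(1) by (simp add: divide_right_mono algebra_simps)
  qed
  finally show ?thesis .
qed

lemma jb_weight_mult_sum_abs_xderiv_le:
  assumes "0 < lam" "0 \<le> t" "t < Tb" "y \<in> cbox x (x + 1)"
  shows "(jb v)\<^sup>2 * jb (x - (t + 1) *\<^sub>R v) * (\<Sum>K\<in>UNIV. \<bar>xderiv K t y v\<bar>)
    \<le> 16 * lam * jb v powr (-6) + 2 / lam * (\<Sum>K\<in>UNIV. (weighted_xderiv K t y v)\<^sup>2)"
proof -
  have "(jb v)\<^sup>2 * jb (x - (t + 1) *\<^sub>R v) * (\<Sum>K\<in>UNIV. \<bar>xderiv K t y v\<bar>)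
      = (\<Sum>K\<in>UNIV. (jb v)\<^sup>2 * jb (x - (t + 1) *\<^sub>R v) * \<bar>xderiv K t y v\<bar>)"
    by (simp add: sum_distrib_left)
  also have "\<dots> \<le> (\<Sum>K\<in>(UNIV :: 3 set set). 2 * lam * jb v powr (-6) + 2 / lam * (weighted_xderiv K t y v)\<^sup>2)"
    using jb_weight_mult_abs_xderiv_le[OF assms(1-3) norm_diff_le_3_of_mem_unit_cube[OF assms(4)]]
    by (intro sum_mono) simp
  also have "\<dots> = 16 * lam * jb v powr (-6) + 2 / lam * (\<Sum>K\<in>UNIV. (weighted_xderiv K t y v)\<^sup>2)"
    by (simp add: sum.distrib sum_distrib_left)
  finally show ?thesis .
qed

lemma moment_integrand_le:
  assumes "0 < lam" "0 \<le> t" "t < Tb"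
  shows "ennreal ((jb v)\<^sup>2 * jb (x - (t + 1) *\<^sub>R v) * f t x v)
    \<le> ennreal (16 * lam * jb v powr (-6))
      + ennreal (2 / lam) * (\<Sum>K\<in>UNIV. \<integral>\<^sup>+y. ennreal ((weighted_xderiv K t y v)\<^sup>2) \<partial>lborel)"
proof -
  define c where "c = (jb v)\<^sup>2 * jb (x - (t + 1) *\<^sub>R v)"
  define A where "A = 16 * lam * jb v powr (-6)"
  have c: "0 \<le> c" and A: "0 \<le> A"
    using assms(1) by (simp_all add: c_def A_def)
  have [measurable]: "(\<lambda>y. ennreal ((weighted_xderiv K t y v)\<^sup>2)) \<in> borel_measurable borel" for K
    using borel_measurable_weighted_xderiv_sq(3)[OF assms(3)] by simp
  have pointwise: "ennreal c * ennreal (\<Sum>K\<in>UNIV. \<bar>xderiv K t y v\<bar>)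
      \<le> ennreal A * indicator (cbox x (x + 1)) y
        + ennreal (2 / lam) * (\<Sum>K\<in>UNIV. ennreal ((weighted_xderiv K t y v)\<^sup>2))"
    if "y \<in> cbox x (x + 1)" for y
    using jb_weight_mult_sum_abs_xderiv_le[OF assms that] that c A assms(1)
    by (simp add: c_def A_def ennreal_mult[symmetric] ennreal_plus[symmetric] sum_nonneg del: ennreal_plus)
  have "ennreal (c * f t x v) = ennreal c * ennreal \<bar>f t x v\<bar>"
    using c f_nonneg[OF assms(2,3)] by (simp add: ennreal_mult)
  also have "\<dots> \<le> ennreal c * (\<integral>\<^sup>+y\<in>cbox x (x + 1). ennreal (\<Sum>K\<in>UNIV. \<bar>xderiv K t y v\<bar>) \<partial>lborel)"
    using abs_f_le_nn_integral_cube[OF assms(3)] by (intro mult_left_mono) simp_all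
  also have "\<dots> = (\<integral>\<^sup>+y. ennreal c * ennreal (\<Sum>K\<in>UNIV. \<bar>xderiv K t y v\<bar>) * indicator (cbox x (x + 1)) y \<partial>lborel)"
    by (simp add: nn_integral_cmult_finite[symmetric] mult.assoc)
  also have "\<dots> \<le> (\<integral>\<^sup>+y. ennreal A * indicator (cbox x (x + 1)) y
        + ennreal (2 / lam) * (\<Sum>K\<in>UNIV. ennreal ((weighted_xderiv K t y v)\<^sup>2)) \<partial>lborel)"
    using pointwise by (intro nn_integral_mono) (auto split: split_indicator)
  also have "\<dots> = ennreal A + ennreal (2 / lam) * (\<integral>\<^sup>+y. (\<Sum>K\<in>UNIV. ennreal ((weighted_xderiv K t y v)\<^sup>2)) \<partial>lborel)"
    by (simp add: nn_integral_add nn_integral_cmult emeasure_lborel_unit_cube del: sum_ennreal)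
  also have "(\<integral>\<^sup>+y. (\<Sum>K\<in>UNIV. ennreal ((weighted_xderiv K t y v)\<^sup>2)) \<partial>lborel)
      = (\<Sum>K\<in>UNIV. \<integral>\<^sup>+y. ennreal ((weighted_xderiv K t y v)\<^sup>2) \<partial>lborel)"
    by (rule nn_integral_sum) measurable
  finally show ?thesis
    by (simp only: c_def A_def)
qed

lemma borel_measurable_nn_integral_weighted_xderiv_sq:
  "t < Tb \<Longrightarrow> (\<lambda>v. \<integral>\<^sup>+y. ennreal ((weighted_xderiv K t y v)\<^sup>2) \<partial>lborel) \<in> borel_measurable lborel"
  using lborel.borel_measurable_nn_integral[OF borel_measurable_weighted_xderiv_sq(2)] by simp

lemma nn_integral_sum_weighted_xderiv_sq_le:
  assumes "0 \<le> t" "t < Tb"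
  shows "(\<integral>\<^sup>+v. (\<Sum>K\<in>UNIV. \<integral>\<^sup>+y. ennreal ((weighted_xderiv K t y v)\<^sup>2) \<partial>lborel) \<partial>lborel)
    \<le> ennreal (8 * \<epsilon> powr (3/2))"
proof -
  have "(\<integral>\<^sup>+v. (\<Sum>K\<in>UNIV. \<integral>\<^sup>+y. ennreal ((weighted_xderiv K t y v)\<^sup>2) \<partial>lborel) \<partial>lborel)
      = (\<Sum>K\<in>UNIV. \<integral>\<^sup>+v. \<integral>\<^sup>+y. ennreal ((weighted_xderiv K t y v)\<^sup>2) \<partial>lborel \<partial>lborel)"
    by (rule nn_integral_sum[OF borel_measurable_nn_integral_weighted_xderiv_sq[OF assms(2)]])
  also have "\<dots> = (\<Sum>K\<in>UNIV. L2xv_sq (weighted_xderiv K) t)"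
    unfolding L2xv_sq_def using lborel_pair.Fubini'[OF borel_measurable_weighted_xderiv_sq(1)[OF assms(2)]]
    by simp
  also have "\<dots> \<le> (\<Sum>K\<in>(UNIV :: 3 set set). ennreal (\<epsilon> powr (3/2)))"
    using L2xv_sq_weighted_xderiv_le[OF assms] by (intro sum_mono) simp
  finally show ?thesis
    by (simp add: ennreal_mult)
qed

lemma moment_le:
  assumes "0 \<le> t" "t < Tb"
  shows "(\<integral>\<^sup>+v. ennreal ((jb v)\<^sup>2 * jb (x - (t + 1) *\<^sub>R v) * f t x v) \<partial>lborel)
    \<le> ennreal (16 * (pi ^ 3 + 1) * \<epsilon> powr (3/4))"
proof -
  define lam where "lam = \<epsilon> powr (3/4)"
  have lam: "0 < lam" and lam_sq: "\<epsilon> powr (3/2) = lam\<^sup>2"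
    using eps_pos by (simp_all add: lam_def power2_eq_square flip: powr_add)
  let ?S = "\<lambda>v. \<Sum>K\<in>UNIV. \<integral>\<^sup>+y. ennreal ((weighted_xderiv K t y v)\<^sup>2) \<partial>lborel"
  have S_meas: "(\<lambda>v. ennreal (2 / lam) * ?S v) \<in> borel_measurable lborel"
    using borel_measurable_nn_integral_weighted_xderiv_sq[OF assms(2)]
    by (intro borel_measurable_times_ennreal borel_measurable_const borel_measurable_sum)
  have "(\<lambda>v::real^3. 16 * lam * jb v powr (-6)) \<in> borel_measurable borel"
    by (intro borel_measurable_continuous_onI continuous_intros)
  then have jb_meas: "(\<lambda>v::real^3. ennreal (16 * lam) * ennreal (jb v powr (-6))) \<in> borel_measurable lborel"
    using lam by (simp add: ennreal_mult[symmetric] measurable_compose[OF _ measurable_ennreal])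
  have "(\<integral>\<^sup>+v. ennreal ((jb v)\<^sup>2 * jb (x - (t + 1) *\<^sub>R v) * f t x v) \<partial>lborel)
      \<le> (\<integral>\<^sup>+v. ennreal (16 * lam) * ennreal (jb v powr (-6)) + ennreal (2 / lam) * ?S v \<partial>lborel)"
    using moment_integrand_le[OF lam assms] lam by (intro nn_integral_mono) (simp add: ennreal_mult)
  also have "\<dots> = (\<integral>\<^sup>+v. ennreal (16 * lam) * ennreal (jb v powr (-6)) \<partial>lborel)
      + (\<integral>\<^sup>+v. ennreal (2 / lam) * ?S v \<partial>lborel)"
    by (rule nn_integral_add[OF jb_meas S_meas])
  also have "\<dots> = ennreal (16 * lam) * (\<integral>\<^sup>+v. ennreal (jb v powr (-6)) \<partial>lborel)
      + ennreal (2 / lam) * (\<integral>\<^sup>+v. ?S v \<partial>lborel)"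
    by (intro arg_cong2[where f = "(+)"] nn_integral_cmult_finite ennreal_less_top)
  also have "\<dots> \<le> ennreal (16 * lam) * ennreal (pi ^ 3) + ennreal (2 / lam) * ennreal (8 * lam\<^sup>2)"
    using nn_integral_sum_weighted_xderiv_sq_le[OF assms] lam_sq
    by (intro add_mono mult_left_mono nn_integral_jb_powr_neg6_le) simp_all
  also have "\<dots> = ennreal (16 * (pi ^ 3 + 1) * \<epsilon> powr (3/4))"
  proof -
    have "16 * lam * pi ^ 3 + 2 / lam * (8 * lam\<^sup>2) = 16 * (pi ^ 3 + 1) * \<epsilon> powr (3/4)"
      using lam by (simp add: lam_def power2_eq_square field_simps)
    then show ?thesis
      using lam by (simp add: ennreal_mult[symmetric] ennreal_plus[symmetric] del: ennreal_plus)
  qed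
  finally show ?thesis .
qed

lemma abar_le:
  assumes "-1 \<le> \<gamma>" "\<gamma> \<le> 1" "0 \<le> t" "t < Tb"
  shows "(1 + t) * \<bar>abar \<gamma> f i j t x v\<bar>
    \<le> 256 * (pi ^ 3 + 1) * \<epsilon> powr (3/4) * (jb v)\<^sup>2 * jb (x - (t + 1) *\<^sub>R v)"
proof -
  define c where "c = 16 * (jb v)\<^sup>2 * jb (x - (t + 1) *\<^sub>R v)"
  define M where "M = 16 * (pi ^ 3 + 1) * \<epsilon> powr (3/4)"
  have c: "0 \<le> c" and M: "0 \<le> M"
    by (simp_all add: c_def M_def)
  have "ennreal ((1 + t) * \<bar>abar \<gamma> f i j t x v\<bar>) = ennreal (1 + t) * ennreal \<bar>abar \<gamma> f i j t x v\<bar>"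
    using assms by (simp add: ennreal_mult)
  also have "\<dots> \<le> ennreal (1 + t) * (\<integral>\<^sup>+w. ennreal \<bar>acoef \<gamma> i j (v - w) * f t x w\<bar> \<partial>lborel)"
    using norm_integral_le_nn_integral_norm[of lborel "\<lambda>w. acoef \<gamma> i j (v - w) * f t x w"]
    by (intro mult_left_mono) (simp_all add: abar_def)
  also have "\<dots> = (\<integral>\<^sup>+w. ennreal ((1 + t) * \<bar>acoef \<gamma> i j (v - w) * f t x w\<bar>) \<partial>lborel)"
    using assms by (simp add: nn_integral_cmult_finite[symmetric] ennreal_mult)
  also have "\<dots> \<le> (\<integral>\<^sup>+w. ennreal c * ennreal ((jb w)\<^sup>2 * jb (x - (t + 1) *\<^sub>R w) * f t x w) \<partial>lborel)"
  proof (rule nn_integral_mono)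
    fix w
    have fw: "0 \<le> f t x w"
      using f_nonneg assms by simp
    have "(1 + t) * \<bar>acoef \<gamma> i j (v - w) * f t x w\<bar> = (1 + t) * \<bar>acoef \<gamma> i j (v - w)\<bar> * f t x w"
      using fw by (simp add: abs_mult)
    also have "\<dots> \<le> 16 * (jb v)\<^sup>2 * (jb w)\<^sup>2 * jb (x - (t + 1) *\<^sub>R v) * jb (x - (t + 1) *\<^sub>R w) * f t x w"
      using time_mult_abs_acoef_le_jb[OF assms(1,2), of t i j v w x] assms(3) fw by (intro mult_right_mono) auto
    also have "\<dots> = c * ((jb w)\<^sup>2 * jb (x - (t + 1) *\<^sub>R w) * f t x w)"
      by (simp add: c_def mult_ac)
    finally show "ennreal ((1 + t) * \<bar>acoef \<gamma> i j (v - w) * f t x w\<bar>)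
        \<le> ennreal c * ennreal ((jb w)\<^sup>2 * jb (x - (t + 1) *\<^sub>R w) * f t x w)"
      using c fw by (simp add: ennreal_mult[symmetric] ennreal_leI)
  qed
  also have "\<dots> = ennreal c * (\<integral>\<^sup>+w. ennreal ((jb w)\<^sup>2 * jb (x - (t + 1) *\<^sub>R w) * f t x w) \<partial>lborel)"
    by (rule nn_integral_cmult_finite) simp
  also have "\<dots> \<le> ennreal c * ennreal M"
    unfolding M_def by (intro mult_left_mono moment_le assms) simp
  finally have "(1 + t) * \<bar>abar \<gamma> f i j t x v\<bar> \<le> c * M"
    using c M by (simp add: ennreal_mult[symmetric] ennreal_le_iff)
  also have "c * M = 256 * (pi ^ 3 + 1) * \<epsilon> powr (3/4) * (jb v)\<^sup>2 * jb (x - (t + 1) *\<^sub>R v)"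
    by (simp add: c_def M_def algebra_simps)
  finally show ?thesis .
qed

lemma time_integral_energy_le:
  assumes "mlen a + mlen b + mlen s \<le> 10" "0 \<le> T" "T < Tb" "0 \<le> \<delta>"
  shows "(\<integral>\<^sup>+t\<in>{0..<T}. L2xv_sq
            (\<lambda>t x v. sqrt (jb v) * Wt a b s t x v * Dop a b s (gfun d0 \<delta> f) t x v) t \<partial>lborel)
    \<le> ennreal ((1 + T) powr (real (mlen b) * (1 + \<delta>)) * \<epsilon> powr (3/2))"
proof -
  define p where "p = real (mlen b) * (1 + \<delta>)"
  let ?S = "SUP t\<in>{0..<T}. L2xv_sq (\<lambda>t x v. Wt a b s t x v * Dop a b s (gfun d0 \<delta> f) t x v) t"
  let ?I = "\<integral>\<^sup>+t\<in>{0..<T}. L2xv_sq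
            (\<lambda>t x v. sqrt (jb v) * Wt a b s t x v * Dop a b s (gfun d0 \<delta> f) t x v) t \<partial>lborel"
  have inverse: "ennreal ((1 + T) powr p) * ennreal ((1 + T) powr (- p)) = 1"
    using assms(2) by (simp add: ennreal_mult[symmetric] powr_minus)
  have "?I = ennreal ((1 + T) powr p) * (ennreal ((1 + T) powr (- p)) * ?I)"
    by (simp add: mult.assoc[symmetric] inverse)
  also have "\<dots> \<le> ennreal ((1 + T) powr p) * (ennreal ((1 + T) powr (- p)) * (?S + ?I))"
    by (intro mult_left_mono) auto
  also have "\<dots> \<le> ennreal ((1 + T) powr p) * ennreal (\<epsilon> powr (3/2))"
    using energy_term_le[OF assms(1-3)] by (intro mult_left_mono) (simp_all add: p_def)
  finally show ?thesis
    by (simp add: p_def ennreal_mult)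
qed

lemma A5_slice_le:
  assumes "-1 \<le> \<gamma>" "\<gamma> \<le> 1" "0 \<le> t" "t < Tb"
  shows "(\<integral>\<^sup>+x. \<integral>\<^sup>+v. ennreal \<bar>(1 + t) * jb v powr (2 * nu a b s - 1)
      * jb (x - (t + 1) *\<^sub>R v) powr (2 * omega a b s - 1) * abar \<gamma> f i j t x v
      * (Dop a b s (gfun d0 \<delta> f) t x v)\<^sup>2\<bar> \<partial>lborel \<partial>lborel)
    \<le> ennreal (256 * (pi ^ 3 + 1) * \<epsilon> powr (3/4))
      * L2xv_sq (\<lambda>t x v. sqrt (jb v) * Wt a b s t x v * Dop a b s (gfun d0 \<delta> f) t x v) t"
proof -
  define c where "c = 256 * (pi ^ 3 + 1) * \<epsilon> powr (3/4)"
  have c: "0 \<le> c"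
    by (simp add: c_def)
  have "(\<integral>\<^sup>+x. \<integral>\<^sup>+v. ennreal \<bar>(1 + t) * jb v powr (2 * nu a b s - 1)
      * jb (x - (t + 1) *\<^sub>R v) powr (2 * omega a b s - 1) * abar \<gamma> f i j t x v
      * (Dop a b s (gfun d0 \<delta> f) t x v)\<^sup>2\<bar> \<partial>lborel \<partial>lborel)
    \<le> (\<integral>\<^sup>+x. \<integral>\<^sup>+v. ennreal c
        * ennreal ((sqrt (jb v) * Wt a b s t x v * Dop a b s (gfun d0 \<delta> f) t x v)\<^sup>2) \<partial>lborel \<partial>lborel)"
  proof (intro nn_integral_mono)
    fix x v
    have "(1 + t) * \<bar>abar \<gamma> f i j t x v\<bar> \<le> c * (jb v)\<^sup>2 * jb (x - (t + 1) *\<^sub>R v)"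
      unfolding c_def using abar_le[OF assms] by (simp add: mult.assoc)
    from powr_weighted_integrand_le[OF jb_pos jb_pos _ this, of "nu a b s" "omega a b s"
        "Dop a b s (gfun d0 \<delta> f) t x v"] assms(3)
    show "ennreal \<bar>(1 + t) * jb v powr (2 * nu a b s - 1) * jb (x - (t + 1) *\<^sub>R v) powr (2 * omega a b s - 1)
          * abar \<gamma> f i j t x v * (Dop a b s (gfun d0 \<delta> f) t x v)\<^sup>2\<bar>
        \<le> ennreal c * ennreal ((sqrt (jb v) * Wt a b s t x v * Dop a b s (gfun d0 \<delta> f) t x v)\<^sup>2)"
      using c by (simp add: Wt_def mult.assoc ennreal_mult[symmetric] ennreal_leI)
  qed
  also have "\<dots> = ennreal c * L2xv_sq (\<lambda>t x v. sqrt (jb v) * Wt a b s t x v * Dop a b s (gfun d0 \<delta> f) t x v) t"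
    unfolding L2xv_sq_def by (simp add: nn_integral_cmult_finite)
  finally show ?thesis
    by (simp only: c_def)
qed

lemma A5_le:
  assumes "-1 \<le> \<gamma>" "\<gamma> \<le> 1" "0 \<le> \<delta>" "\<epsilon> \<le> 1"
    and "mlen a + mlen b + mlen s \<le> 10" "0 \<le> T" "T < Tb"
  shows "A5 \<gamma> d0 \<delta> f a b s i j T
    \<le> ennreal (256 * (pi ^ 3 + 1) * \<epsilon>\<^sup>2 * (1 + T) powr (2 * real (mlen b) * (1 + \<delta>)))"
proof -
  define c where "c = 256 * (pi ^ 3 + 1) * \<epsilon> powr (3/4)"
  define p where "p = real (mlen b) * (1 + \<delta>)"
  define L where "L t = L2xv_sq (\<lambda>t x v. sqrt (jb v) * Wt a b s t x v * Dop a b s (gfun d0 \<delta> f) t x v) t" for t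
  define slice where "slice t = (\<integral>\<^sup>+x. \<integral>\<^sup>+v. ennreal \<bar>(1 + t) * jb v powr (2 * nu a b s - 1)
      * jb (x - (t + 1) *\<^sub>R v) powr (2 * omega a b s - 1) * abar \<gamma> f i j t x v
      * (Dop a b s (gfun d0 \<delta> f) t x v)\<^sup>2\<bar> \<partial>lborel \<partial>lborel)" for t
  have "A5 \<gamma> d0 \<delta> f a b s i j T = (\<integral>\<^sup>+t. slice t * indicator {0..T} t \<partial>lborel)"
    by (simp add: A5_def slice_def)
  also have "\<dots> = (\<integral>\<^sup>+t\<in>{0..<T}. slice t \<partial>lborel)"
    by (rule nn_integral_cong_AE) (use AE_lborel_singleton[of T] in \<open>auto split: split_indicator\<close>)
  also have "\<dots> \<le> (\<integral>\<^sup>+t\<in>{0..<T}. ennreal c * L t \<partial>lborel)"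
    using A5_slice_le[OF assms(1,2)] assms(7)
    by (intro nn_integral_mono) (auto simp: slice_def L_def c_def split: split_indicator)
  also have "\<dots> = ennreal c * (\<integral>\<^sup>+t\<in>{0..<T}. L t \<partial>lborel)"
    by (simp add: nn_integral_cmult_finite mult.assoc)
  also have "\<dots> \<le> ennreal c * ennreal ((1 + T) powr p * \<epsilon> powr (3/2))"
    unfolding L_def p_def by (intro mult_left_mono time_integral_energy_le assms) simp
  also have "\<dots> \<le> ennreal (256 * (pi ^ 3 + 1) * \<epsilon>\<^sup>2 * (1 + T) powr (2 * real (mlen b) * (1 + \<delta>)))"
  proof -
    have "\<epsilon> powr (3/4) * \<epsilon> powr (3/2) \<le> \<epsilon> powr 2"
      unfolding powr_add[symmetric] using eps_pos assms(4) by (intro powr_mono') auto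
    moreover have "(1 + T) powr p \<le> (1 + T) powr (2 * real (mlen b) * (1 + \<delta>))"
      using assms(3,6) by (intro powr_mono) (auto simp: p_def)
    ultimately have "256 * (pi ^ 3 + 1) * (\<epsilon> powr (3/4) * \<epsilon> powr (3/2)) * (1 + T) powr p
        \<le> 256 * (pi ^ 3 + 1) * \<epsilon> powr 2 * (1 + T) powr (2 * real (mlen b) * (1 + \<delta>))"
      by (intro mult_mono mult_left_mono) auto
    then show ?thesis
      using eps_pos by (simp add: c_def mult_ac powr_numeral ennreal_mult[symmetric] ennreal_leI)
  qed
  finally show ?thesis .
qed

end

lemma init_small_imp_pos:
  assumes "init_small d0 \<epsilon> f"
  shows "0 < \<epsilon>"
proof -
  have "0 < ennreal \<epsilon>"
    using assms unfolding init_small_def by (rule le_less_trans[OF zero_le])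
  then show ?thesis
    by simp
qed

theorem proposition7p15:
  fixes \<gamma> d0 :: real
  assumes "0 \<le> \<gamma>" "\<gamma> < 1" "0 < d0"
  shows "\<exists>\<epsilon>0 > 0. \<exists>C. \<forall>\<delta> \<epsilon> Tb (f :: phase_fun).
    0 < \<delta> \<longrightarrow> \<delta> < 1/8 \<longrightarrow> 0 \<le> \<epsilon> \<longrightarrow> \<epsilon> \<le> \<epsilon>0 \<longrightarrow> 0 < Tb \<longrightarrow>
    smooth_on ({..<Tb} \<times> UNIV) (\<lambda>(t, x, v). f t x v) \<longrightarrow>
    landau_sol \<gamma> Tb f \<longrightarrow>
    (\<forall>t x v. 0 \<le> t \<longrightarrow> t < Tb \<longrightarrow> 0 \<le> f t x v) \<longrightarrow>
    init_small d0 \<epsilon> f \<longrightarrow>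
    (\<forall>T. 0 \<le> T \<longrightarrow> T < Tb \<longrightarrow> energy_sq \<delta> T (gfun d0 \<delta> f) \<le> ennreal ((\<epsilon> powr (3/4))\<^sup>2)) \<longrightarrow>
    (\<forall>a b s i j T. mlen a + mlen b + mlen s \<le> 10 \<longrightarrow> 0 \<le> T \<longrightarrow> T < Tb \<longrightarrow>
       A5 \<gamma> d0 \<delta> f a b s i j T
         \<le> ennreal (C * \<epsilon>\<^sup>2 * (1 + T) powr (2 * real (mlen b) * (1 + \<delta>))))"
proof (rule exI[of _ 1], intro conjI exI[of _ "256 * (pi ^ 3 + 1)"] allI impI)
  fix \<delta> \<epsilon> Tb :: real and f :: phase_fun and a b s :: "3 \<Rightarrow> nat" and i j :: 3 and T :: real
  assume "0 < \<delta>" "\<delta> < 1/8" "0 \<le> \<epsilon>" "\<epsilon> \<le> 1" "0 < Tb"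
    and "smooth_on ({..<Tb} \<times> UNIV) (\<lambda>(t, x, v). f t x v)" "landau_sol \<gamma> Tb f"
    and "\<forall>t x v. 0 \<le> t \<longrightarrow> t < Tb \<longrightarrow> 0 \<le> f t x v" "init_small d0 \<epsilon> f"
    and "\<forall>T. 0 \<le> T \<longrightarrow> T < Tb \<longrightarrow> energy_sq \<delta> T (gfun d0 \<delta> f) \<le> ennreal ((\<epsilon> powr (3/4))\<^sup>2)"
    and "mlen a + mlen b + mlen s \<le> 10" "0 \<le> T" "T < Tb"
  moreover from this have "bootstrap d0 \<delta> \<epsilon> Tb f"
    using assms(3) init_small_imp_pos by unfold_locales auto
  ultimately show "A5 \<gamma> d0 \<delta> f a b s i j T
      \<le> ennreal (256 * (pi ^ 3 + 1) * \<epsilon>\<^sup>2 * (1 + T) powr (2 * real (mlen b) * (1 + \<delta>)))"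
    using assms(1,2) by (intro bootstrap.A5_le) auto
qed simp
end
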